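(* Let $n\ge 1$, $m\ge 2$ and $0\le k\le n-1$, and let $\mathcal{C}^k_{ac}$ be the class of all complete acyclic $k$-bounded CP-nets over $n$ variables of domain size $m$, over the instance space $\mathcal{X}_{swap}$. Then \[n(m-1)m^k\le n(m-1)\mathcal{U}_k\le \mathrm{TD}(\mathcal{C}^k_{ac})\le e_{max}+n(m-1)\mathcal{U}_k\le nk+n(m-1)\binom{n-1}{k}m^k.\] Moreover, $\mathrm{TD}(\mathcal{C}^0_{ac})=(m-1)n$, $\mathrm{TD}(\mathcal{C}^1_{ac})=(m-1)mn$, and $\mathrm{TD}(\mathcal{C}^{n-1}_{ac})=(m-1)nm^{n-1}$.
   Context: Variables $V=\{v_1,\dots,v_n\}$, each with a finite domain of size $m$. An outcome assigns a value to every variable; $\mathcal{O}_X$ denotes assignments to $X\subseteq V$. A CP-net specifies for each $v_i$ a parent set $Pa(v_i)\subseteq V\setminus\{v_i\}$ and, for each context $\gamma\in\mathcal{O}_{Pa(v_i)}$, either a strict total order $\succ^{v_i}_\gamma$ on $D_{v_i}$ or nothing; complete means an order is given for every variable and context; parents are non-dummy (each parent actually affects the preferences). Acyclic: the graph with edges $(v_j,v_i)$, $v_j\in Pa(v_i)$, is acyclic; $k$-bounded: all $|Pa(v_i)|\le k$. Improving flip: changing only $v_i$ to a value preferred under $\succ^{v_i}_{o[Pa(v_i)]}$; $o'\succ o$ iff a nonempty sequence of improving flips leads from $o$ to $o'$. A swap is an ordered pair $x=(x.1,x.2)$ of outcomes differing in exactly one variable; $\mathcal{X}_{swap}$ contains,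 for each unordered such pair, exactly one of its two orderings (fixed arbitrarily); a CP-net $N$ is the concept $c_N(x)=1$ iff $x.1\succ x.2$. A teaching set for $c$ in class $\mathcal{C}$ is a set of labeled examples consistent with $c$ and with no other concept of $\mathcal{C}$; $\mathrm{TD}(c,\mathcal{C})$ is the minimum size of one and $\mathrm{TD}(\mathcal{C})=\max_{c\in\mathcal{C}}\mathrm{TD}(c,\mathcal{C})$. $e_{max}=(n-k)k+\binom{k}{2}$. A set $S\subseteq\{1,\dots,m\}^{n-1}$ is $(m,n-1,k)$-universal if for every set of $k$ coordinates, the projection of $S$ onto these coordinates contains all $m^k$ vectors; $\mathcal{U}_k$ is the smallest size of an $(m,n-1,k)$-universal set. *)

theory Defs
  imports "HOL-Library.FuncSet"
begin

definition outcomes :: "nat \<Rightarrow> nat \<Rightarrow> (nat \<Rightarrow> nat) set" where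
  "outcomes n m = {w. (\<forall>i<n. w i < m) \<and> (\<forall>i\<ge>n. w i = 0)}"

definition is_swap :: "nat \<Rightarrow> nat \<Rightarrow> (nat \<Rightarrow> nat) \<times> (nat \<Rightarrow> nat) \<Rightarrow> bool" where
  "is_swap n m x \<longleftrightarrow> fst x \<in> outcomes n m \<and> snd x \<in> outcomes n m \<and>
     card {i. i < n \<and> fst x i \<noteq> snd x i} = 1"

text \<open>An instance space X_swap: for each unordered swap pair exactly one of its
  two orderings (chosen arbitrarily).\<close>
definition swap_space :: "nat \<Rightarrow> nat \<Rightarrow> ((nat \<Rightarrow> nat) \<times> (nat \<Rightarrow> nat)) set \<Rightarrow> bool" where
  "swap_space n m X \<longleftrightarrow> (\<forall>x\<in>X. is_swap n m x) \<and>
     (\<forall>a b. is_swap n m (a, b) \<longrightarrow> ((a, b) \<in> X \<longleftrightarrow> (b, a) \<notin> X))"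

text \<open>CP-net: parent sets Pa and conditional preference tables ord.
  ord i w is the strict order (pairs (a,b) meaning a preferred to b) on the
  domain of variable i in the context given by the outcome w restricted to Pa i.\<close>

definition strict_total_dom :: "nat \<Rightarrow> (nat \<times> nat) set \<Rightarrow> bool" where
  "strict_total_dom m r \<longleftrightarrow> r \<subseteq> {0..<m} \<times> {0..<m} \<and> strict_linear_order_on {0..<m} r"

definition complete_acyclic_cpnet ::
  "nat \<Rightarrow> nat \<Rightarrow> nat \<Rightarrow> (nat \<Rightarrow> nat set) \<Rightarrow> (nat \<Rightarrow> (nat \<Rightarrow> nat) \<Rightarrow> (nat \<times> nat) set) \<Rightarrow> bool"
  where
  "complete_acyclic_cpnet n m k Pa ord \<longleftrightarrow>
     (\<forall>i<n. Pa i \<subseteq> {0..<n} - {i}) \<and>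
     (\<forall>i<n. card (Pa i) \<le> k) \<and>
     acyclic {(j, i). i < n \<and> j \<in> Pa i} \<and>
     \<comment> \<open>complete: a strict total order for every variable and context\<close>
     (\<forall>i<n. \<forall>w\<in>outcomes n m. strict_total_dom m (ord i w)) \<and>
     \<comment> \<open>the order depends only on the context of the parents\<close>
     (\<forall>i<n. \<forall>w\<in>outcomes n m. \<forall>w'\<in>outcomes n m.
        (\<forall>j\<in>Pa i. w j = w' j) \<longrightarrow> ord i w = ord i w') \<and>
     \<comment> \<open>parents are non-dummy\<close>
     (\<forall>i<n. \<forall>j\<in>Pa i. \<exists>w\<in>outcomes n m. \<exists>w'\<in>outcomes n m.
        (\<forall>l. l \<noteq> j \<longrightarrow> w l = w' l) \<and> ord i w \<noteq> ord i w')"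

definition improving_flip ::
  "nat \<Rightarrow> nat \<Rightarrow> (nat \<Rightarrow> (nat \<Rightarrow> nat) \<Rightarrow> (nat \<times> nat) set) \<Rightarrow> ((nat \<Rightarrow> nat) \<times> (nat \<Rightarrow> nat)) set"
  where
  "improving_flip n m ord = {(w, w'). w \<in> outcomes n m \<and>
     (\<exists>i<n. \<exists>v<m. v \<noteq> w i \<and> w' = w(i := v) \<and> (v, w i) \<in> ord i w)}"

text \<open>w' \<succ> w iff (w, w') in the transitive closure of improving flips.
  The concept of a CP-net on the instance space X.\<close>
definition cp_concept ::
  "nat \<Rightarrow> nat \<Rightarrow> ((nat \<Rightarrow> nat) \<times> (nat \<Rightarrow> nat)) set \<Rightarrow> (nat \<Rightarrow> (nat \<Rightarrow> nat) \<Rightarrow> (nat \<times> nat) set)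
    \<Rightarrow> ((nat \<Rightarrow> nat) \<times> (nat \<Rightarrow> nat) \<Rightarrow> bool)" where
  "cp_concept n m X ord = (\<lambda>x. x \<in> X \<and> (snd x, fst x) \<in> (improving_flip n m ord)\<^sup>+)"

definition C_ac :: "nat \<Rightarrow> nat \<Rightarrow> nat \<Rightarrow> ((nat \<Rightarrow> nat) \<times> (nat \<Rightarrow> nat)) set
    \<Rightarrow> ((nat \<Rightarrow> nat) \<times> (nat \<Rightarrow> nat) \<Rightarrow> bool) set" where
  "C_ac n m k X = {cp_concept n m X ord | Pa ord. complete_acyclic_cpnet n m k Pa ord}"

definition teaching_set :: "'x set \<Rightarrow> ('x \<Rightarrow> bool) set \<Rightarrow> ('x \<Rightarrow> bool) \<Rightarrow> ('x \<times> bool) set \<Rightarrow> bool" where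
  "teaching_set X C c S \<longleftrightarrow> S \<subseteq> X \<times> UNIV \<and> (\<forall>(x, l)\<in>S. c x = l) \<and>
     (\<forall>c'\<in>C. (\<forall>(x, l)\<in>S. c' x = l) \<longrightarrow> c' = c)"

definition TD_of :: "'x set \<Rightarrow> ('x \<Rightarrow> bool) set \<Rightarrow> ('x \<Rightarrow> bool) \<Rightarrow> nat" where
  "TD_of X C c = Min {card S | S. teaching_set X C c S}"

definition TD :: "'x set \<Rightarrow> ('x \<Rightarrow> bool) set \<Rightarrow> nat" where
  "TD X C = Max ((TD_of X C) ` C)"

definition e_max :: "nat \<Rightarrow> nat \<Rightarrow> nat" where
  "e_max n k = (n - k) * k + (k choose 2)"

definition universal :: "nat \<Rightarrow> nat \<Rightarrow> nat \<Rightarrow> (nat \<Rightarrow> nat) set \<Rightarrow> bool" where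
  "universal m d k S \<longleftrightarrow> S \<subseteq> PiE {0..<d} (\<lambda>_. {1..m}) \<and>
     (\<forall>K. K \<subseteq> {0..<d} \<and> card K = k \<longrightarrow>
        (\<lambda>s. restrict s K) ` S = PiE K (\<lambda>_. {1..m}))"

definition U :: "nat \<Rightarrow> nat \<Rightarrow> nat \<Rightarrow> nat" where
  "U m n k = Min {card S | S. universal m (n - 1) k S}"

end

(*
  Upper bound: in an acyclic CP-net a swap is entailed exactly when the conditional preference
  table says so, and a strict total order on m values is determined by its m - 1 covering pairs.
  So m - 1 labelled swaps pin down the table of a variable in one context. Taking as contexts the
  vectors of an (m, n-1, k)-universal set (placed on the other variables) reaches every assignment
  to at most k parents; one further swap per edge of the net forces every other consistent net to
  have at least these parents, so both nets have the same tables and the same concept. There are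
  at most e_max edges in a k-bounded acyclic graph.

  Lower bound: take the net without parents that orders every domain naturally. For each variable
  i and adjacent values a, a + 1 the swaps of a and a + 1 at i in a teaching set must have context
  vectors forming a universal set: if a pattern g on k coordinates were missing, the net giving i
  those k parents and reversing a and a + 1 exactly in the contexts matching g would be consistent
  with the teaching set. These n (m - 1) families of examples are disjoint.
*)
theory Submission
  imports Defs "HOL-Combinatorics.Transposition"
begin

section \<open>Strict total orders\<close>

lemma strict_total_dom_bounded:
  "strict_total_dom m r \<Longrightarrow> (a, b) \<in> r \<Longrightarrow> a < m \<and> b < m"
  unfolding strict_total_dom_def by auto

lemma strict_total_dom_irrefl: "strict_total_dom m r \<Longrightarrow> (a, a) \<notin> r"
  unfolding strict_total_dom_def strict_linear_order_on_def irrefl_def by blast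

lemma strict_total_dom_trans:
  "strict_total_dom m r \<Longrightarrow> (a, b) \<in> r \<Longrightarrow> (b, c) \<in> r \<Longrightarrow> (a, c) \<in> r"
  unfolding strict_total_dom_def strict_linear_order_on_def by (meson transD)

lemma strict_total_dom_total:
  "strict_total_dom m r \<Longrightarrow> a < m \<Longrightarrow> b < m \<Longrightarrow> a \<noteq> b \<Longrightarrow> (a, b) \<in> r \<or> (b, a) \<in> r"
  unfolding strict_total_dom_def strict_linear_order_on_def total_on_def by simp

lemma strict_total_dom_asym_iff:
  assumes "strict_total_dom m r" "a < m" "b < m" "a \<noteq> b"
  shows "(a, b) \<in> r \<longleftrightarrow> (b, a) \<notin> r"
  using assms strict_total_dom_total strict_total_dom_trans strict_total_dom_irrefl by metis

lemma finite_strict_total_dom: "strict_total_dom m r \<Longrightarrow> finite r"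
  unfolding strict_total_dom_def by (meson finite_SigmaI finite_atLeastLessThan finite_subset)

definition covering_pairs :: "('a \<times> 'a) set \<Rightarrow> ('a \<times> 'a) set" where
  "covering_pairs r = {(a, b) \<in> r. \<not> (\<exists>c. (a, c) \<in> r \<and> (c, b) \<in> r)}"

lemma covering_pairs_subset: "covering_pairs r \<subseteq> r"
  unfolding covering_pairs_def by auto

lemma card_covering_pairs:
  assumes r: "strict_total_dom m r"
  shows "card (covering_pairs r) \<le> m - 1"
proof (cases "r = {}")
  case True
  then show ?thesis by (simp add: covering_pairs_def)
next
  case False
  have "trans r" "irrefl r"
    using r unfolding strict_total_dom_def strict_linear_order_on_def by auto
  then have "wf r"
    using finite_strict_total_dom[OF r]
    by (simp add: wf_iff_acyclic_if_finite acyclic_def trancl_id irrefl_def)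
  moreover have "Domain r \<noteq> {}"
    using False by auto
  ultimately obtain z where z: "z \<in> Domain r" "\<forall>y. (y, z) \<in> r \<longrightarrow> y \<notin> Domain r"
    unfolding wf_eq_minimal by blast
  have z_min: "(y, z) \<notin> r" for y
    using z by blast
  \<comment> \<open>in a total order every element has at most one immediate predecessor, and the least has none\<close>
  have inj: "inj_on snd (covering_pairs r)"
  proof (rule inj_onI)
    fix p q assume p: "p \<in> covering_pairs r" and q: "q \<in> covering_pairs r" and "snd p = snd q"
    then obtain a a' b where pq: "p = (a, b)" "q = (a', b)" by (metis prod.collapse)
    then have "(a, b) \<in> r" "(a', b) \<in> r"
      using p q covering_pairs_subset by auto
    with r have "a = a' \<or> (a, a') \<in> r \<or> (a', a) \<in> r"
      by (meson strict_total_dom_bounded strict_total_dom_total)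
    then show "p = q"
      using p q pq unfolding covering_pairs_def by blast
  qed
  have "snd ` covering_pairs r \<subseteq> {0..<m} - {z}"
    using z_min strict_total_dom_bounded[OF r] unfolding covering_pairs_def by force
  then have "card (snd ` covering_pairs r) \<le> card ({0..<m} - {z})"
    by (simp add: card_mono)
  also have "\<dots> = m - 1"
    using z strict_total_dom_bounded[OF r] by auto
  finally show ?thesis
    using card_image[OF inj] by simp
qed

lemma subset_if_covering_pairs_subset:
  assumes "finite r" "trans r" "irrefl r" "trans r'" "covering_pairs r \<subseteq> r'"
  shows "r \<subseteq> r'"
proof -
  have "(a, b) \<in> r'" if "(a, b) \<in> r" for a b
    using that
  proof (induction "card {c. (a, c) \<in> r \<and> (c, b) \<in> r}" arbitrary: a b rule: less_induct)
    case less
    show ?case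
    proof (cases "(a, b) \<in> covering_pairs r")
      case True
      then show ?thesis using assms(5) by blast
    next
      case False
      then obtain c where c: "(a, c) \<in> r" "(c, b) \<in> r"
        using less.prems unfolding covering_pairs_def by blast
      have fin: "finite {d. (a, d) \<in> r \<and> (d, b) \<in> r}"
        by (rule finite_subset[OF _ finite_Range[OF assms(1)]]) blast
      have "{d. (a, d) \<in> r \<and> (d, c) \<in> r} \<subset> {d. (a, d) \<in> r \<and> (d, b) \<in> r}"
        "{d. (c, d) \<in> r \<and> (d, b) \<in> r} \<subset> {d. (a, d) \<in> r \<and> (d, b) \<in> r}"
        using c assms(2,3) unfolding trans_def irrefl_def by blast+
      then have "(a, c) \<in> r'" "(c, b) \<in> r'"
        using less.hyps psubset_card_mono[OF fin] c by blast+
      then show ?thesis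
        using assms(4) by (meson transD)
    qed
  qed
  then show ?thesis by auto
qed

lemma strict_total_dom_eq_if_subset:
  assumes r: "strict_total_dom m r" and r': "strict_total_dom m r'" and "r \<subseteq> r'"
  shows "r' = r"
proof
  show "r' \<subseteq> r"
  proof
    fix p assume p: "p \<in> r'"
    obtain a b where ab: "p = (a, b)"
      by fastforce
    then have "a < m" "b < m" "a \<noteq> b"
      using p r' strict_total_dom_bounded strict_total_dom_irrefl by blast+
    have "(b, a) \<notin> r"
      using p ab assms(3) strict_total_dom_asym_iff[OF r' \<open>a < m\<close> \<open>b < m\<close> \<open>a \<noteq> b\<close>] by blast
    then show "p \<in> r"
      using ab strict_total_dom_total[OF r \<open>a < m\<close> \<open>b < m\<close> \<open>a \<noteq> b\<close>] by blast
  qed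
qed (rule assms(3))

lemma strict_total_dom_eq_if_covering_pairs_subset:
  assumes r: "strict_total_dom m r" and r': "strict_total_dom m r'" and "covering_pairs r \<subseteq> r'"
  shows "r' = r"
proof (rule strict_total_dom_eq_if_subset[OF r r' subset_if_covering_pairs_subset])
  show "finite r" "trans r" "irrefl r" "trans r'"
    using r r' finite_strict_total_dom unfolding strict_total_dom_def strict_linear_order_on_def
    by blast+
qed (rule assms(3))

definition rank_order :: "nat \<Rightarrow> (nat \<Rightarrow> nat) \<Rightarrow> (nat \<times> nat) set" where
  "rank_order m f = {(p, q). p < m \<and> q < m \<and> f q < f p}"

lemma strict_total_dom_rank_order:
  assumes "inj f"
  shows "strict_total_dom m (rank_order m f)"
  using assms unfolding strict_total_dom_def strict_linear_order_on_def rank_order_def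
    trans_def irrefl_def total_on_def
  by (auto simp: nat_neq_iff) (metis injD less_irrefl_nat nat_neq_iff)+

lemma rank_order_transpose_iff:
  assumes "\<alpha> \<noteq> \<beta>" "{\<alpha>, \<beta>} \<noteq> {a, Suc a}"
  shows "(\<alpha>, \<beta>) \<in> rank_order m (transpose a (Suc a)) \<longleftrightarrow> (\<alpha>, \<beta>) \<in> rank_order m id"
  using assms unfolding rank_order_def transpose_def by (auto simp: doubleton_eq_iff)

lemma trancl_Un_cases:
  assumes "(x, y) \<in> (A \<union> B)\<^sup>+"
  shows "(x, y) \<in> A\<^sup>+ \<or> (x, y) \<in> (A \<union> B)\<^sup>* O B O (A \<union> B)\<^sup>*"
  using assms
proof (induction rule: trancl_induct)
  case (step y z)
  from step.IH show ?case
  proof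
    assume xy: "(x, y) \<in> A\<^sup>+"
    show ?thesis
    proof (cases "(y, z) \<in> A")
      case True
      then show ?thesis using xy by auto
    next
      case False
      then have "(y, z) \<in> B" using step by auto
      moreover have "(x, y) \<in> (A \<union> B)\<^sup>*"
        using trancl_into_rtrancl[OF trancl_mono[OF xy, of "A \<union> B"]] by blast
      ultimately show ?thesis by blast
    qed
  next
    assume "(x, y) \<in> (A \<union> B)\<^sup>* O B O (A \<union> B)\<^sup>*"
    then show ?thesis
      using step(2) by (blast intro: rtrancl_into_rtrancl)
  qed
qed blast

lemma obtain_superset_with_card:
  assumes "finite B" "A \<subseteq> B" "card A \<le> k" "k \<le> card B"
  obtains C where "A \<subseteq> C" "C \<subseteq> B" "card C = k"
proof -
  have finA: "finite A"
    using finite_subset[OF assms(2,1)] .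
  have "k - card A \<le> card (B - A)"
    using card_Diff_subset[OF finA assms(2)] assms(4) by simp
  then obtain D where D: "D \<subseteq> B - A" "card D = k - card A"
    by (rule obtain_subset_with_card_n)
  have "card (A \<union> D) = card A + card D"
    using D finA finite_subset[OF D(1)] assms(1) by (intro card_Un_disjoint) auto
  then show ?thesis
    using that[of "A \<union> D"] D assms(2,3) by auto
qed

lemma card_acyclic_le_sum_min:
  assumes "finite V" "G \<subseteq> V \<times> V" "acyclic G" "\<And>i. i \<in> V \<Longrightarrow> card {j. (j, i) \<in> G} \<le> k"
  shows "card G \<le> (\<Sum>p<card V. min p k)"
  using assms
proof (induction "card V" arbitrary: V G rule: less_induct)
  case less
  show ?case
  proof (cases "V = {}")
    case True
    then show ?thesis using less.prems(2) by simp
  next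
    case False
    have "finite G"
      using less.prems(1,2) by (simp add: finite_subset)
    then have "wf (G\<inverse>)"
      using less.prems(3) by (simp add: wf_iff_acyclic_if_finite acyclic_converse)
    \<comment> \<open>remove a sink \<open>i\<close>: only the edges into \<open>i\<close> are lost\<close>
    then obtain i where i: "i \<in> V" "\<And>j. (j, i) \<in> G\<inverse> \<Longrightarrow> j \<notin> V"
      by (rule wfE_min'[OF _ False]) blast
    let ?V' = "V - {i}" and ?In = "{j. (j, i) \<in> G}"
    let ?G' = "G \<inter> ?V' \<times> ?V'"
    have "(i, i) \<notin> G"
      using less.prems(3) unfolding acyclic_def by blast
    then have In_sub: "?In \<subseteq> ?V'"
      using less.prems(2) by blast
    have finV': "finite ?V'"
      using less.prems(1) by simp
    have cardV: "card V = Suc (card ?V')"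
      using card.remove[OF less.prems(1) i(1)] .
    have "card G \<le> card ((\<lambda>j. (j, i)) ` ?In \<union> ?G')"
    proof (rule card_mono)
      show "finite ((\<lambda>j. (j, i)) ` ?In \<union> ?G')"
        using finite_subset[OF In_sub finV'] finV' by simp
      show "G \<subseteq> (\<lambda>j. (j, i)) ` ?In \<union> ?G'"
        using i less.prems(2) by auto
    qed
    also have "\<dots> \<le> card ((\<lambda>j. (j, i)) ` ?In) + card ?G'"
      by (rule card_Un_le)
    also have "\<dots> \<le> min (card ?V') k + (\<Sum>p<card ?V'. min p k)"
    proof (rule add_mono)
      have "card ((\<lambda>j. (j, i)) ` ?In) \<le> card ?In"
        using finite_subset[OF In_sub finV'] by (rule card_image_le)
      moreover have "card ?In \<le> card ?V'"
        using card_mono[OF finV' In_sub] .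
      ultimately show "card ((\<lambda>j. (j, i)) ` ?In) \<le> min (card ?V') k"
        using less.prems(4)[OF i(1)] by simp
      show "card ?G' \<le> (\<Sum>p<card ?V'. min p k)"
      proof (rule less.hyps)
        show "card ?V' < card V"
          using cardV by simp
        show "acyclic ?G'"
          using less.prems(3) acyclic_subset by blast
        show "card {j. (j, l) \<in> ?G'} \<le> k" if "l \<in> ?V'" for l
        proof -
          have "{j. (j, l) \<in> G} \<subseteq> V"
            using less.prems(2) by blast
          then have "card {j. (j, l) \<in> ?G'} \<le> card {j. (j, l) \<in> G}"
            using finite_subset[OF _ less.prems(1)] by (intro card_mono) auto
          then show ?thesis
            using less.prems(4)[of l] that by simp
        qed
      qed (use finV' in auto)
    qed
    also have "\<dots> = (\<Sum>p<card V. min p k)"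
      unfolding cardV by simp
    finally show ?thesis .
  qed
qed

lemma sum_min_eq:
  assumes "k \<le> N"
  shows "(\<Sum>p<N. min p k) = (N - k) * k + (k choose 2)"
  using assms
proof (induction N rule: dec_induct)
  case base
  have "(\<Sum>p<k. min p k) = (\<Sum>p<k. p)"
    by (rule sum.cong) auto
  also have "\<dots> = k choose 2"
    by (induction k) (simp_all add: numeral_2_eq_2)
  finally show ?case by simp
next
  case (step N)
  then show ?case
    by (simp add: Suc_diff_le)
qed

section \<open>Teaching dimension\<close>

lemma finite_teaching_set_cards:
  assumes "finite X"
  shows "finite {card S | S. teaching_set X C c S}"
proof (rule finite_subset)
  have "card S \<le> card (X \<times> (UNIV :: bool set))" if "teaching_set X C c S" for S
    using that assms unfolding teaching_set_def by (intro card_mono) simp_all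
  then show "{card S | S. teaching_set X C c S} \<subseteq> {..card (X \<times> (UNIV :: bool set))}"
    by blast
qed simp

lemma TD_le:
  assumes "finite X" "finite C" "C \<noteq> {}"
    and "\<And>c. c \<in> C \<Longrightarrow> \<exists>S. teaching_set X C c S \<and> card S \<le> B"
  shows "TD X C \<le> B"
proof -
  have "TD_of X C c \<le> B" if c: "c \<in> C" for c
  proof -
    obtain S where S: "teaching_set X C c S" "card S \<le> B"
      using assms(4)[OF c] by blast
    have "TD_of X C c \<le> card S"
      unfolding TD_of_def using finite_teaching_set_cards[OF assms(1)] S(1) by (auto intro: Min_le)
    then show ?thesis
      using S(2) by simp
  qed
  then show ?thesis
    unfolding TD_def using assms(2,3) by simp
qed

lemma le_TD:
  assumes "finite X" "finite C" "c \<in> C" "teaching_set X C c S\<^sub>0"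
    and "\<And>S. teaching_set X C c S \<Longrightarrow> B \<le> card S"
  shows "B \<le> TD X C"
proof -
  have "B \<le> TD_of X C c"
    unfolding TD_of_def using finite_teaching_set_cards[OF assms(1)] assms(4,5)
    by (subst Min_ge_iff) auto
  also have "TD_of X C c \<le> TD X C"
    unfolding TD_def using assms(2,3) by simp
  finally show ?thesis .
qed

lemma teaching_set_graph:
  assumes "c \<in> C" "\<And>c' x. c' \<in> C \<Longrightarrow> c' x \<Longrightarrow> x \<in> X"
  shows "teaching_set X C c ((\<lambda>x. (x, c x)) ` X)"
  unfolding teaching_set_def
proof (intro conjI ballI impI)
  fix c' assume c': "c' \<in> C" and agree: "\<forall>(x, l)\<in>(\<lambda>x. (x, c x)) ` X. c' x = l"
  show "c' = c"
  proof
    fix x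
    show "c' x = c x"
    proof (cases "x \<in> X")
      case True
      then show ?thesis using agree by blast
    next
      case False
      then show ?thesis using assms c' by blast
    qed
  qed
qed auto

section \<open>Acyclic CP-nets\<close>

lemma outcomes_upd: "t \<in> outcomes n m \<Longrightarrow> i < n \<Longrightarrow> a < m \<Longrightarrow> t(i := a) \<in> outcomes n m"
  unfolding outcomes_def by auto

lemma outcomes_less: "t \<in> outcomes n m \<Longrightarrow> i < n \<Longrightarrow> t i < m"
  unfolding outcomes_def by auto

lemma finite_outcomes: "finite (outcomes n m)"
proof (rule finite_subset)
  show "outcomes n m \<subseteq> {f. \<forall>x. (x \<in> {..<n} \<longrightarrow> f x \<in> {..<m}) \<and> (x \<notin> {..<n} \<longrightarrow> f x = 0)}"
    unfolding outcomes_def by (auto simp: not_less)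
qed (rule finite_set_of_finite_funs; simp)

lemma complete_acyclic_cpnetD:
  assumes "complete_acyclic_cpnet n m k Pa ord"
  shows "\<forall>i<n. Pa i \<subseteq> {0..<n} - {i}" "\<forall>i<n. card (Pa i) \<le> k"
    "acyclic {(j, i). i < n \<and> j \<in> Pa i}"
    "\<forall>i<n. \<forall>w\<in>outcomes n m. strict_total_dom m (ord i w)"
    "\<forall>i<n. \<forall>w\<in>outcomes n m. \<forall>w'\<in>outcomes n m.
       (\<forall>j\<in>Pa i. w j = w' j) \<longrightarrow> ord i w = ord i w'"
    "\<forall>i<n. \<forall>j\<in>Pa i. \<exists>w\<in>outcomes n m. \<exists>w'\<in>outcomes n m.
       (\<forall>l. l \<noteq> j \<longrightarrow> w l = w' l) \<and> ord i w \<noteq> ord i w'"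
  using assms by (simp_all only: complete_acyclic_cpnet_def) (elim conjE; assumption)+

lemma cpnet_parents:
  "complete_acyclic_cpnet n m k Pa ord \<Longrightarrow> i < n \<Longrightarrow> Pa i \<subseteq> {0..<n} - {i}"
  using complete_acyclic_cpnetD(1) by blast

lemma cpnet_card_parents:
  "complete_acyclic_cpnet n m k Pa ord \<Longrightarrow> i < n \<Longrightarrow> card (Pa i) \<le> k"
  using complete_acyclic_cpnetD(2) by blast

lemma finite_cpnet_parents:
  "complete_acyclic_cpnet n m k Pa ord \<Longrightarrow> i < n \<Longrightarrow> finite (Pa i)"
  using cpnet_parents by (meson finite_Diff finite_atLeastLessThan finite_subset)

lemma cpnet_acyclic:
  "complete_acyclic_cpnet n m k Pa ord \<Longrightarrow> acyclic {(j, i). i < n \<and> j \<in> Pa i}"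
  using complete_acyclic_cpnetD(3) .

lemma finite_cpnet_graph:
  assumes "complete_acyclic_cpnet n m k Pa ord"
  shows "finite {(j, i). i < n \<and> j \<in> Pa i}"
proof (rule finite_subset)
  show "{(j, i). i < n \<and> j \<in> Pa i} \<subseteq> {0..<n} \<times> {0..<n}"
    using cpnet_parents[OF assms] by fastforce
qed simp

lemma cpnet_order:
  "complete_acyclic_cpnet n m k Pa ord \<Longrightarrow> i < n \<Longrightarrow> w \<in> outcomes n m \<Longrightarrow> strict_total_dom m (ord i w)"
  using complete_acyclic_cpnetD(4) by blast

lemma cpnet_order_cong:
  assumes "complete_acyclic_cpnet n m k Pa ord" "i < n" "w \<in> outcomes n m" "w' \<in> outcomes n m"
    "\<And>j. j \<in> Pa i \<Longrightarrow> w j = w' j"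
  shows "ord i w = ord i w'"
  using complete_acyclic_cpnetD(5)[OF assms(1)] assms(2-5) by blast

lemma cpnet_nondummy:
  assumes "complete_acyclic_cpnet n m k Pa ord" "i < n" "j \<in> Pa i"
  obtains w w' where "w \<in> outcomes n m" "w' \<in> outcomes n m" "\<And>l. l \<noteq> j \<Longrightarrow> w l = w' l"
    "ord i w \<noteq> ord i w'"
  using complete_acyclic_cpnetD(6)[OF assms(1)] assms(2,3) by blast

lemma cpnet_parent_if_order_differs:
  assumes "complete_acyclic_cpnet n m k Pa ord" "i < n" "w \<in> outcomes n m" "w' \<in> outcomes n m"
    "\<And>l. l \<noteq> j \<Longrightarrow> w l = w' l" "ord i w \<noteq> ord i w'"
  shows "j \<in> Pa i"
proof (rule ccontr)
  assume "j \<notin> Pa i"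
  then have "ord i w = ord i w'"
    by (intro cpnet_order_cong[OF assms(1-4)]) (metis assms(5))
  then show False using assms(6) by contradiction
qed

lemma complete_acyclic_cpnetI:
  assumes "\<And>i. i < n \<Longrightarrow> Pa i \<subseteq> {0..<n} - {i}" "\<And>i. i < n \<Longrightarrow> card (Pa i) \<le> k"
    "acyclic {(j, i). i < n \<and> j \<in> Pa i}"
    "\<And>i w. i < n \<Longrightarrow> w \<in> outcomes n m \<Longrightarrow> strict_total_dom m (ord i w)"
    "\<And>i w w'. i < n \<Longrightarrow> w \<in> outcomes n m \<Longrightarrow> w' \<in> outcomes n m \<Longrightarrow>
       (\<And>j. j \<in> Pa i \<Longrightarrow> w j = w' j) \<Longrightarrow> ord i w = ord i w'"
    "\<And>i j. i < n \<Longrightarrow> j \<in> Pa i \<Longrightarrow> \<exists>w\<in>outcomes n m. \<exists>w'\<in>outcomes n m.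
       (\<forall>l. l \<noteq> j \<longrightarrow> w l = w' l) \<and> ord i w \<noteq> ord i w'"
  shows "complete_acyclic_cpnet n m k Pa ord"
  unfolding complete_acyclic_cpnet_def
  by (intro conjI allI impI ballI) (fact assms(1), fact assms(2), fact assms(3),
    fact assms(4), meson assms(5), fact assms(6))

lemma cpnet_without_parents: "complete_acyclic_cpnet n m k (\<lambda>_. {}) (\<lambda>_ _. rank_order m id)"
  by (rule complete_acyclic_cpnetI) (auto simp: acyclic_def strict_total_dom_rank_order)

lemma cpnet_exists_parentless:
  assumes net: "complete_acyclic_cpnet n m k Pa ord" and "F \<subseteq> {0..<n}" "F \<noteq> {}"
  obtains j where "j \<in> F" "Pa j \<inter> F = {}"
proof -
  have "wf {(j, i). i < n \<and> j \<in> Pa i}"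
    using finite_cpnet_graph[OF net] cpnet_acyclic[OF net] wf_iff_acyclic_if_finite by blast
  then obtain j where "j \<in> F" "\<forall>l. (l, j) \<in> {(j, i). i < n \<and> j \<in> Pa i} \<longrightarrow> l \<notin> F"
    using assms(3) unfolding wf_eq_minimal by blast
  moreover have "j < n"
    using \<open>j \<in> F\<close> assms(2) by auto
  ultimately show ?thesis
    using that by blast
qed

lemma card_cpnet_edges:
  assumes net: "complete_acyclic_cpnet n m k Pa ord" and "k \<le> n"
  shows "card {(j, i). i < n \<and> j \<in> Pa i} \<le> e_max n k"
proof -
  have "card {(j, i). i < n \<and> j \<in> Pa i} \<le> (\<Sum>p<card {0..<n}. min p k)"
  proof (rule card_acyclic_le_sum_min)
    show "{(j, i). i < n \<and> j \<in> Pa i} \<subseteq> {0..<n} \<times> {0..<n}"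
      using cpnet_parents[OF net] by fastforce
    show "card {j. (j, i) \<in> {(j, i). i < n \<and> j \<in> Pa i}} \<le> k" if "i \<in> {0..<n}" for i
      using cpnet_card_parents[OF net] that by simp
  qed (simp_all add: cpnet_acyclic[OF net])
  then show ?thesis
    unfolding e_max_def using sum_min_eq[OF assms(2)] by simp
qed

lemma e_max_le: "k \<le> n \<Longrightarrow> e_max n k \<le> n * k"
proof -
  assume "k \<le> n"
  then have "(n - k) * k + k * k = n * k"
    by (simp add: diff_mult_distrib)
  moreover have "k choose 2 \<le> k * k"
    by (simp add: choose_two le_trans[OF div_le_dividend])
  ultimately show ?thesis
    unfolding e_max_def by linarith
qed

definition flips_on ::
  "nat \<Rightarrow> nat \<Rightarrow> (nat \<Rightarrow> (nat \<Rightarrow> nat) \<Rightarrow> (nat \<times> nat) set) \<Rightarrow> nat set \<Rightarrow> ((nat \<Rightarrow> nat) \<times> (nat \<Rightarrow> nat)) set"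
  where "flips_on n m ord F = {(w, w'). w \<in> outcomes n m \<and>
     (\<exists>i\<in>F. i < n \<and> (\<exists>v<m. v \<noteq> w i \<and> w' = w(i := v) \<and> (v, w i) \<in> ord i w))}"

lemma improving_flip_eq_flips_on: "improving_flip n m ord = flips_on n m ord {0..<n}"
  unfolding improving_flip_def flips_on_def by auto

lemma rtrancl_flips_on_improves:
  assumes net: "complete_acyclic_cpnet n m k Pa ord" and j: "j < n" and disj: "Pa j \<inter> F = {}"
    and p: "p \<in> outcomes n m" and pq: "(p, q) \<in> (flips_on n m ord F)\<^sup>*"
  shows "q \<in> outcomes n m \<and> (\<forall>l\<in>Pa j. q l = p l) \<and> (q j = p j \<or> (q j, p j) \<in> ord j p)"
  using pq
proof (induction rule: rtrancl_induct)
  case base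
  then show ?case using p by auto
next
  case (step q r)
  then have q: "q \<in> outcomes n m" "\<forall>l\<in>Pa j. q l = p l" "q j = p j \<or> (q j, p j) \<in> ord j p"
    by auto
  from step(2) obtain i v where iv: "i \<in> F" "i < n" "v < m" "r = q(i := v)" "(v, q i) \<in> ord i q"
    unfolding flips_on_def by auto
  have "ord j q = ord j p"
    using cpnet_order_cong[OF net j q(1) p] q(2) by auto
  then have "r j = p j \<or> (r j, p j) \<in> ord j p"
    using q(3) iv strict_total_dom_trans[OF cpnet_order[OF net j p]] by (cases "i = j") auto
  moreover have "\<forall>l\<in>Pa j. r l = p l"
    using q(2) iv disj by auto
  moreover have "r \<in> outcomes n m"
    using outcomes_upd[OF q(1) iv(2,3)] iv(4) by simp
  ultimately show ?case
    by blast
qed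

lemma parentless_flip_not_on_cycle:
  assumes net: "complete_acyclic_cpnet n m k Pa ord" and j: "j < n" "Pa j \<inter> F = {}"
    and w: "w \<in> outcomes n m" and uu: "(w, u) \<in> (flips_on n m ord F)\<^sup>*" "(u, u') \<in> flips_on n m ord {j}"
    "(u', w) \<in> (flips_on n m ord F)\<^sup>*"
  shows False
proof -
  \<comment> \<open>the parents of \<open>j\<close> never move, so \<open>j\<close> only ever improves in one fixed order\<close>
  have u: "u \<in> outcomes n m" "\<forall>l\<in>Pa j. u l = w l" "u j = w j \<or> (u j, w j) \<in> ord j w"
    using rtrancl_flips_on_improves[OF net j w uu(1)] by auto
  from uu(2) obtain v where v: "v < m" "u' = u(j := v)" "(v, u j) \<in> ord j u"
    unfolding flips_on_def by blast
  have u': "u' \<in> outcomes n m"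
    using outcomes_upd[OF u(1) j(1) v(1)] v(2) by simp
  have u'w: "\<forall>l\<in>Pa j. w l = u' l" "w j = u' j \<or> (w j, u' j) \<in> ord j u'"
    using rtrancl_flips_on_improves[OF net j u' uu(3)] by auto
  have ord_u: "ord j u = ord j w" and ord_u': "ord j u' = ord j w"
    using cpnet_order_cong[OF net j(1) u(1) w] cpnet_order_cong[OF net j(1) u' w] u(2) u'w(1)
    by auto
  have r: "strict_total_dom m (ord j w)"
    using cpnet_order[OF net j(1) w] .
  have "(u' j, u j) \<in> ord j w"
    using v(2,3) ord_u by simp
  then have "(w j, u j) \<in> ord j w"
    using u'w(2) ord_u' strict_total_dom_trans[OF r] by metis
  then have "(w j, w j) \<in> ord j w"
    using u(3) strict_total_dom_trans[OF r] by metis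
  then show False
    using strict_total_dom_irrefl[OF r] by blast
qed

lemma acyclic_flips_on:
  assumes net: "complete_acyclic_cpnet n m k Pa ord"
  shows "F \<subseteq> {0..<n} \<Longrightarrow> acyclic (flips_on n m ord F)"
proof (induction "card F" arbitrary: F rule: less_induct)
  case less
  show ?case
  proof (cases "F = {}")
    case True
    then have "flips_on n m ord F = {}"
      unfolding flips_on_def by blast
    then show ?thesis by (simp add: acyclic_def)
  next
    case False
    then obtain j where j: "j \<in> F" "Pa j \<inter> F = {}"
      using cpnet_exists_parentless[OF net less.prems] by blast
    have jn: "j < n"
      using j less.prems by auto
    let ?A = "flips_on n m ord (F - {j})" and ?B = "flips_on n m ord {j}"
    have split: "flips_on n m ord F = ?A \<union> ?B"
      unfolding flips_on_def using j by blast
    have "card (F - {j}) < card F"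
      using finite_subset[OF less.prems] j(1) by (intro card_Diff1_less) auto
    then have acyc_A: "acyclic ?A"
      using less.hyps[of "F - {j}"] less.prems by blast
    show ?thesis
      unfolding acyclic_def
    proof (intro allI notI)
      fix w
      assume cyc: "(w, w) \<in> (flips_on n m ord F)\<^sup>+"
      then obtain w' where "(w, w') \<in> flips_on n m ord F"
        by (meson tranclD)
      then have w: "w \<in> outcomes n m"
        unfolding flips_on_def by blast
      have "(w, w) \<notin> ?A\<^sup>+"
        using acyc_A unfolding acyclic_def by blast
      then have "(w, w) \<in> (?A \<union> ?B)\<^sup>* O ?B O (?A \<union> ?B)\<^sup>*"
        using trancl_Un_cases[of w w ?A ?B] cyc unfolding split by blast
      then obtain u u' where "(w, u) \<in> (?A \<union> ?B)\<^sup>*" "(u, u') \<in> ?B" "(u', w) \<in> (?A \<union> ?B)\<^sup>*"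
        by blast
      then show False
        using parentless_flip_not_on_cycle[OF net jn j(2) w] unfolding split by blast
    qed
  qed
qed

lemma acyclic_improving_flip:
  "complete_acyclic_cpnet n m k Pa ord \<Longrightarrow> acyclic (improving_flip n m ord)"
  unfolding improving_flip_eq_flips_on by (rule acyclic_flips_on) auto

lemma improving_flip_swap_iff:
  assumes net: "complete_acyclic_cpnet n m k Pa ord" and t: "t \<in> outcomes n m" and i: "i < n"
    and ab: "a < m" "b < m" "a \<noteq> b"
  shows "(t(i := b), t(i := a)) \<in> (improving_flip n m ord)\<^sup>+ \<longleftrightarrow> (a, b) \<in> ord i t"
proof -
  have "i \<notin> Pa i"
    using cpnet_parents[OF net i] by auto
  then have ord_upd: "ord i (t(i := c)) = ord i t" if "c < m" for c
    by (intro cpnet_order_cong[OF net i outcomes_upd[OF t i that] t]) auto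
  have flip: "(t(i := d), t(i := c)) \<in> improving_flip n m ord" if "(c, d) \<in> ord i t" "c \<noteq> d"
    "c < m" "d < m" for c d
    unfolding improving_flip_def using that outcomes_upd[OF t i] ord_upd i by fastforce
  show ?thesis
  proof
    assume ba: "(t(i := b), t(i := a)) \<in> (improving_flip n m ord)\<^sup>+"
    show "(a, b) \<in> ord i t"
    proof (rule ccontr)
      assume "(a, b) \<notin> ord i t"
      then have "(b, a) \<in> ord i t"
        using strict_total_dom_total[OF cpnet_order[OF net i t] ab] by blast
      then have "(t(i := a), t(i := b)) \<in> improving_flip n m ord"
        using flip ab by blast
      then show False
        using ba acyclic_improving_flip[OF net] unfolding acyclic_def by (meson trancl_into_trancl2)
    qed
  qed (use flip ab in blast)
qed

lemma is_swap_upd: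
  assumes "t \<in> outcomes n m" "i < n" "a < m" "b < m" "a \<noteq> b"
  shows "is_swap n m (t(i := a), t(i := b))"
proof -
  have "{l. l < n \<and> (t(i := a)) l \<noteq> (t(i := b)) l} = {i}"
    using assms by auto
  then show ?thesis
    unfolding is_swap_def using outcomes_upd assms by auto
qed

lemma swap_space_mem_iff:
  "swap_space n m X \<Longrightarrow> is_swap n m (a, b) \<Longrightarrow> (a, b) \<in> X \<longleftrightarrow> (b, a) \<notin> X"
  unfolding swap_space_def by blast

lemma is_swapE:
  assumes "is_swap n m x"
  obtains i where "i < n" "fst x = (snd x)(i := fst x i)" "fst x i \<noteq> snd x i"
    "fst x \<in> outcomes n m" "snd x \<in> outcomes n m"
proof -
  have "card {i. i < n \<and> fst x i \<noteq> snd x i} = 1" and out: "fst x \<in> outcomes n m" "snd x \<in> outcomes n m"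
    using assms unfolding is_swap_def by auto
  then obtain i where i: "{i. i < n \<and> fst x i \<noteq> snd x i} = {i}"
    using card_1_singletonE by blast
  have "fst x l = ((snd x)(i := fst x i)) l" for l
    using i out unfolding outcomes_def by (cases "l < n") auto
  then show ?thesis
    using that i out by blast
qed

lemma cp_concept_upd_iff:
  assumes net: "complete_acyclic_cpnet n m k Pa ord" and "t \<in> outcomes n m" "i < n"
    "a < m" "b < m" "a \<noteq> b" "(t(i := a), t(i := b)) \<in> X"
  shows "cp_concept n m X ord (t(i := a), t(i := b)) \<longleftrightarrow> (a, b) \<in> ord i t"
  using improving_flip_swap_iff[OF assms(1-6)] assms(7) unfolding cp_concept_def by simp

lemma cp_concept_swap_iff:
  assumes net: "complete_acyclic_cpnet n m k Pa ord" and "i < n" "fst x = (snd x)(i := fst x i)"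
    "fst x i \<noteq> snd x i" "fst x \<in> outcomes n m" "snd x \<in> outcomes n m" "x \<in> X"
  shows "cp_concept n m X ord x \<longleftrightarrow> (fst x i, snd x i) \<in> ord i (snd x)"
proof -
  have "x = ((snd x)(i := fst x i), (snd x)(i := snd x i))"
    using assms(3) by (simp add: prod_eq_iff)
  moreover have "fst x i < m" "snd x i < m"
    using outcomes_less[OF assms(5,2)] outcomes_less[OF assms(6,2)] .
  ultimately show ?thesis
    using cp_concept_upd_iff[OF net assms(6,2), of "fst x i" "snd x i" X] assms(4,7) by simp
qed

lemma cp_concept_imp_mem: "cp_concept n m X ord x \<Longrightarrow> x \<in> X"
  unfolding cp_concept_def by simp

lemma cp_concept_cong:
  assumes "\<And>i t. i < n \<Longrightarrow> t \<in> outcomes n m \<Longrightarrow> ord' i t = ord i t"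
  shows "cp_concept n m X ord' = cp_concept n m X ord"
proof -
  have "improving_flip n m ord' = improving_flip n m ord"
    unfolding improving_flip_def using assms by fastforce
  then show ?thesis
    unfolding cp_concept_def by simp
qed

lemma finite_swap_space: "swap_space n m X \<Longrightarrow> finite X"
proof (rule finite_subset)
  show "swap_space n m X \<Longrightarrow> X \<subseteq> outcomes n m \<times> outcomes n m"
    unfolding swap_space_def is_swap_def by auto
qed (simp add: finite_outcomes)

lemma finite_C_ac: "finite X \<Longrightarrow> finite (C_ac n m k X)"
proof (rule finite_subset)
  show "C_ac n m k X \<subseteq> (\<lambda>A x. x \<in> A) ` Pow X"
  proof
    fix c assume "c \<in> C_ac n m k X"
    then obtain ord where c: "c = cp_concept n m X ord"
      unfolding C_ac_def by auto
    have "c = (\<lambda>x. x \<in> {x \<in> X. c x})"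
      using cp_concept_imp_mem unfolding c by auto
    then show "c \<in> (\<lambda>A x. x \<in> A) ` Pow X"
      by blast
  qed
qed simp

lemma C_ac_nonempty: "C_ac n m k X \<noteq> {}"
  unfolding C_ac_def using cpnet_without_parents by blast

lemma TD_C_ac_le:
  assumes X: "swap_space n m X"
    and teach: "\<And>Pa ord. complete_acyclic_cpnet n m k Pa ord \<Longrightarrow>
       \<exists>S. teaching_set X (C_ac n m k X) (cp_concept n m X ord) S \<and> card S \<le> B"
  shows "TD X (C_ac n m k X) \<le> B"
proof (rule TD_le[OF finite_swap_space[OF X] finite_C_ac[OF finite_swap_space[OF X]] C_ac_nonempty])
  fix c assume "c \<in> C_ac n m k X"
  then obtain Pa ord where "complete_acyclic_cpnet n m k Pa ord" "c = cp_concept n m X ord"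
    unfolding C_ac_def by blast
  then show "\<exists>S. teaching_set X (C_ac n m k X) c S \<and> card S \<le> B"
    using teach by blast
qed

lemma TD_C_ac_ge:
  assumes X: "swap_space n m X"
    and bound: "\<And>S. teaching_set X (C_ac n m k X) (cp_concept n m X (\<lambda>_ _. rank_order m id)) S \<Longrightarrow>
       B \<le> card S"
  shows "B \<le> TD X (C_ac n m k X)"
proof -
  have c0: "cp_concept n m X (\<lambda>_ _. rank_order m id) \<in> C_ac n m k X"
    unfolding C_ac_def using cpnet_without_parents by blast
  moreover have "c x \<Longrightarrow> x \<in> X" if "c \<in> C_ac n m k X" for c x
    using that cp_concept_imp_mem unfolding C_ac_def by blast
  ultimately show ?thesis
    by (intro le_TD[OF finite_swap_space[OF X] finite_C_ac[OF finite_swap_space[OF X]] c0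
          teaching_set_graph bound])
qed

section \<open>Teaching sets from preference tables\<close>

definition swap_examples ::
  "((nat \<Rightarrow> nat) \<times> (nat \<Rightarrow> nat)) set \<Rightarrow> ((nat \<Rightarrow> nat) \<times> (nat \<Rightarrow> nat) \<Rightarrow> bool)
   \<Rightarrow> nat \<Rightarrow> (nat \<Rightarrow> nat) \<Rightarrow> nat \<Rightarrow> nat \<Rightarrow> (((nat \<Rightarrow> nat) \<times> (nat \<Rightarrow> nat)) \<times> bool) set" where
  "swap_examples X c i t a b =
     (\<lambda>x. (x, c x)) ` ({(t(i := a), t(i := b)), (t(i := b), t(i := a))} \<inter> X)"

lemma swap_examples_subset: "swap_examples X c i t a b \<subseteq> (\<lambda>x. (x, c x)) ` X"
  unfolding swap_examples_def by blast

lemma card_swap_examples: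
  assumes X: "swap_space n m X" and "t \<in> outcomes n m" "i < n" "a < m" "b < m"
  shows "card (swap_examples X c i t a b) \<le> 1"
proof -
  let ?p = "(t(i := a), t(i := b))" and ?q = "(t(i := b), t(i := a))"
  have "\<exists>r. {?p, ?q} \<inter> X \<subseteq> {r}"
  proof (cases "a = b")
    case False
    then have "?p \<in> X \<longleftrightarrow> ?q \<notin> X"
      using swap_space_mem_iff[OF X is_swap_upd] assms by blast
    then show ?thesis
      by blast
  qed blast
  then obtain r where r: "{?p, ?q} \<inter> X \<subseteq> {r}"
    by blast
  have "card (swap_examples X c i t a b) \<le> card ({?p, ?q} \<inter> X)"
    unfolding swap_examples_def by (rule card_image_le) simp
  also have "\<dots> \<le> card {r}"
    using r by (rule card_mono[rotated]) simp
  finally show ?thesis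
    by simp
qed

lemma cpnet_order_pair_eq_if_swap_examples:
  assumes X: "swap_space n m X"
    and net: "complete_acyclic_cpnet n m k Pa ord" and net': "complete_acyclic_cpnet n m k' Pa' ord'"
    and t: "t \<in> outcomes n m" "i < n" and ab: "a < m" "b < m" "a \<noteq> b"
    and agree: "\<forall>(x, l)\<in>swap_examples X (cp_concept n m X ord) i t a b. cp_concept n m X ord' x = l"
  shows "(a, b) \<in> ord' i t \<longleftrightarrow> (a, b) \<in> ord i t"
proof (cases "(t(i := a), t(i := b)) \<in> X")
  case True
  then have "cp_concept n m X ord' (t(i := a), t(i := b)) = cp_concept n m X ord (t(i := a), t(i := b))"
    using agree unfolding swap_examples_def by blast
  then show ?thesis
    using cp_concept_upd_iff[OF net t ab] cp_concept_upd_iff[OF net' t ab] True by simp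
next
  case False
  then have ba: "(t(i := b), t(i := a)) \<in> X"
    using swap_space_mem_iff[OF X is_swap_upd[OF t ab]] by blast
  then have "cp_concept n m X ord' (t(i := b), t(i := a)) = cp_concept n m X ord (t(i := b), t(i := a))"
    using agree unfolding swap_examples_def by blast
  then have "(b, a) \<in> ord' i t \<longleftrightarrow> (b, a) \<in> ord i t"
    using cp_concept_upd_iff[OF net t ab(2,1)] cp_concept_upd_iff[OF net' t ab(2,1)] ab(3) ba by simp
  then show ?thesis
    using strict_total_dom_asym_iff[OF cpnet_order[OF net t(2,1)] ab]
      strict_total_dom_asym_iff[OF cpnet_order[OF net' t(2,1)] ab] by blast
qed

definition order_examples ::
  "nat \<Rightarrow> nat \<Rightarrow> ((nat \<Rightarrow> nat) \<times> (nat \<Rightarrow> nat)) set \<Rightarrow> (nat \<Rightarrow> (nat \<Rightarrow> nat) \<Rightarrow> (nat \<times> nat) set)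
   \<Rightarrow> nat \<Rightarrow> (nat \<Rightarrow> nat) \<Rightarrow> (((nat \<Rightarrow> nat) \<times> (nat \<Rightarrow> nat)) \<times> bool) set" where
  "order_examples n m X ord i t =
     (\<Union>p\<in>covering_pairs (ord i t). swap_examples X (cp_concept n m X ord) i t (fst p) (snd p))"

lemma order_examples_subset: "order_examples n m X ord i t \<subseteq> (\<lambda>x. (x, cp_concept n m X ord x)) ` X"
  unfolding order_examples_def using swap_examples_subset by blast

lemma card_order_examples:
  assumes X: "swap_space n m X" and net: "complete_acyclic_cpnet n m k Pa ord"
    and t: "t \<in> outcomes n m" "i < n"
  shows "card (order_examples n m X ord i t) \<le> m - 1"
proof -
  have r: "strict_total_dom m (ord i t)"
    using cpnet_order[OF net t(2,1)] .
  have fin: "finite (covering_pairs (ord i t))"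
    using finite_subset[OF covering_pairs_subset finite_strict_total_dom[OF r]] .
  have "card (order_examples n m X ord i t)
      \<le> (\<Sum>p\<in>covering_pairs (ord i t). card (swap_examples X (cp_concept n m X ord) i t (fst p) (snd p)))"
    unfolding order_examples_def by (rule card_UN_le[OF fin])
  also have "\<dots> \<le> (\<Sum>p\<in>covering_pairs (ord i t). 1)"
  proof (rule sum_mono)
    fix p assume "p \<in> covering_pairs (ord i t)"
    then have "fst p < m" "snd p < m"
      using r covering_pairs_subset strict_total_dom_bounded by (metis prod.collapse subsetD)+
    then show "card (swap_examples X (cp_concept n m X ord) i t (fst p) (snd p)) \<le> 1"
      using card_swap_examples[OF X t] by blast
  qed
  also have "\<dots> \<le> m - 1"
    using card_covering_pairs[OF r] by simp
  finally show ?thesis .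
qed

lemma cpnet_order_eq_if_order_examples:
  assumes X: "swap_space n m X"
    and net: "complete_acyclic_cpnet n m k Pa ord" and net': "complete_acyclic_cpnet n m k' Pa' ord'"
    and t: "t \<in> outcomes n m" "i < n"
    and agree: "\<forall>(x, l)\<in>order_examples n m X ord i t. cp_concept n m X ord' x = l"
  shows "ord' i t = ord i t"
proof (rule strict_total_dom_eq_if_covering_pairs_subset)
  show r: "strict_total_dom m (ord i t)" "strict_total_dom m (ord' i t)"
    using cpnet_order net net' t by blast+
  show "covering_pairs (ord i t) \<subseteq> ord' i t"
  proof
    fix p assume p: "p \<in> covering_pairs (ord i t)"
    obtain a b where ab: "p = (a, b)"
      by fastforce
    then have "(a, b) \<in> ord i t"
      using p covering_pairs_subset by blast
    then have "a < m" "b < m" "a \<noteq> b"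
      using r(1) strict_total_dom_bounded strict_total_dom_irrefl by blast+
    moreover have "\<forall>(x, l)\<in>swap_examples X (cp_concept n m X ord) i t a b. cp_concept n m X ord' x = l"
      using agree p ab unfolding order_examples_def by fastforce
    ultimately show "p \<in> ord' i t"
      using cpnet_order_pair_eq_if_swap_examples[OF X net net' t] \<open>(a, b) \<in> ord i t\<close> ab by blast
  qed
qed

lemma card_order_examples_UN:
  assumes X: "swap_space n m X" and net: "complete_acyclic_cpnet n m k Pa ord"
    and T: "\<And>i. i < n \<Longrightarrow> T i \<subseteq> outcomes n m"
  shows "card (\<Union>i<n. \<Union>t\<in>T i. order_examples n m X ord i t) \<le> (\<Sum>i<n. card (T i)) * (m - 1)"
proof -
  have "card (\<Union>i<n. \<Union>t\<in>T i. order_examples n m X ord i t)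
      \<le> (\<Sum>i<n. card (\<Union>t\<in>T i. order_examples n m X ord i t))"
    by (rule card_UN_le) simp
  also have "\<dots> \<le> (\<Sum>i<n. card (T i) * (m - 1))"
  proof (rule sum_mono)
    fix i assume i: "i \<in> {..<n}"
    have "finite (T i)"
      using T[of i] i finite_outcomes finite_subset by blast
    then have "card (\<Union>t\<in>T i. order_examples n m X ord i t) \<le> (\<Sum>t\<in>T i. card (order_examples n m X ord i t))"
      by (rule card_UN_le)
    also have "\<dots> \<le> (\<Sum>t\<in>T i. m - 1)"
      using card_order_examples[OF X net] T i by (intro sum_mono) blast
    finally show "card (\<Union>t\<in>T i. order_examples n m X ord i t) \<le> card (T i) * (m - 1)"
      by simp
  qed
  also have "\<dots> = (\<Sum>i<n. card (T i)) * (m - 1)"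
    by (simp add: sum_distrib_right)
  finally show ?thesis .
qed

lemma cpnet_order_eq_if_agree_on_contexts:
  assumes net: "complete_acyclic_cpnet n m k Pa ord" and net': "complete_acyclic_cpnet n m k' Pa' ord'"
    and i: "i < n" and t: "t \<in> outcomes n m" and T: "T \<subseteq> outcomes n m"
    and agree: "\<forall>t'\<in>T. ord' i t' = ord i t'" and covers: "\<exists>t'\<in>T. \<forall>l\<in>Pa i \<union> Pa' i. t' l = t l"
  shows "ord' i t = ord i t"
proof -
  obtain t' where t': "t' \<in> T" "\<forall>l\<in>Pa i \<union> Pa' i. t' l = t l"
    using covers by blast
  have t'_out: "t' \<in> outcomes n m"
    using T t' by blast
  have "ord' i t = ord' i t'"
    using t' by (intro cpnet_order_cong[OF net' i t t'_out]) auto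
  also have "\<dots> = ord i t'"
    using agree t' by blast
  also have "\<dots> = ord i t"
    using t' by (intro cpnet_order_cong[OF net i t'_out t]) auto
  finally show ?thesis .
qed

lemma teaching_set_from_contexts:
  assumes X: "swap_space n m X" and net: "complete_acyclic_cpnet n m k Pa ord"
    and T: "\<And>i. i < n \<Longrightarrow> T i \<subseteq> outcomes n m"
    and E: "E \<subseteq> (\<lambda>x. (x, cp_concept n m X ord x)) ` X"
    and covers: "\<And>Pa' ord'. complete_acyclic_cpnet n m k Pa' ord' \<Longrightarrow>
        \<forall>i<n. \<forall>t\<in>T i. ord' i t = ord i t \<Longrightarrow> \<forall>(x, l)\<in>E. cp_concept n m X ord' x = l \<Longrightarrow>
        \<forall>i<n. \<forall>t\<in>outcomes n m. \<exists>t'\<in>T i. \<forall>l\<in>Pa i \<union> Pa' i. t' l = t l"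
  shows "\<exists>S. teaching_set X (C_ac n m k X) (cp_concept n m X ord) S \<and>
    card S \<le> (\<Sum>i<n. card (T i)) * (m - 1) + card E"
proof (intro exI conjI)
  let ?c = "cp_concept n m X ord"
  let ?S = "(\<Union>i<n. \<Union>t\<in>T i. order_examples n m X ord i t) \<union> E"
  show "card ?S \<le> (\<Sum>i<n. card (T i)) * (m - 1) + card E"
    using card_Un_le card_order_examples_UN[OF X net T] by (meson add_right_mono le_trans)
  have S_graph: "?S \<subseteq> (\<lambda>x. (x, ?c x)) ` X"
    using E order_examples_subset by blast
  show "teaching_set X (C_ac n m k X) ?c ?S"
    unfolding teaching_set_def
  proof (intro conjI ballI impI)
    show "?S \<subseteq> X \<times> UNIV" "\<And>xl. xl \<in> ?S \<Longrightarrow> case xl of (x, l) \<Rightarrow> ?c x = l"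
      using S_graph by auto
    fix c' assume c': "c' \<in> C_ac n m k X" and agree: "\<forall>(x, l)\<in>?S. c' x = l"
    obtain Pa' ord' where net': "complete_acyclic_cpnet n m k Pa' ord'" and c'_def: "c' = cp_concept n m X ord'"
      using c' unfolding C_ac_def by blast
    have agree_T: "\<forall>i<n. \<forall>t\<in>T i. ord' i t = ord i t"
    proof (intro allI impI ballI)
      fix i t assume i: "i < n" and t: "t \<in> T i"
      have "\<forall>(x, l)\<in>order_examples n m X ord i t. cp_concept n m X ord' x = l"
        using agree c'_def i t by blast
      then show "ord' i t = ord i t"
        using cpnet_order_eq_if_order_examples[OF X net net'] T i t by blast
    qed
    have "\<forall>(x, l)\<in>E. cp_concept n m X ord' x = l"
      using agree c'_def by blast
    note cov = covers[OF net' agree_T this]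
    have "ord' i t = ord i t" if "i < n" "t \<in> outcomes n m" for i t
      using cpnet_order_eq_if_agree_on_contexts[OF net net' that T] agree_T cov that by blast
    then show "c' = ?c"
      unfolding c'_def by (rule cp_concept_cong)
  qed
qed

section \<open>Universal sets\<close>

definition succ_above :: "nat \<Rightarrow> nat \<Rightarrow> nat" where
  "succ_above i l = (if l < i then l else Suc l)"

definition pred_above :: "nat \<Rightarrow> nat \<Rightarrow> nat" where
  "pred_above i p = (if p < i then p else p - 1)"

lemma pred_above_succ_above [simp]: "pred_above i (succ_above i l) = l"
  unfolding succ_above_def pred_above_def by auto

lemma succ_above_pred_above: "p \<noteq> i \<Longrightarrow> succ_above i (pred_above i p) = p"
  unfolding succ_above_def pred_above_def by auto

lemma succ_above_neq: "succ_above i l \<noteq> i"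
  unfolding succ_above_def by auto

lemma succ_above_less: "l < n - 1 \<Longrightarrow> i < n \<Longrightarrow> succ_above i l < n"
  unfolding succ_above_def by auto

lemma pred_above_less: "p < n \<Longrightarrow> p \<noteq> i \<Longrightarrow> i < n \<Longrightarrow> pred_above i p < n - 1"
  unfolding pred_above_def by auto

lemma inj_on_pred_above: "inj_on (pred_above i) (- {i})"
  unfolding inj_on_def pred_above_def by auto

lemma inj_succ_above: "inj (succ_above i)"
  unfolding inj_on_def succ_above_def by auto

text \<open>Universal vectors have entries in \<open>{1..m}\<close> while outcome values lie in \<open>{0..<m}\<close>,
  hence the shift by one.\<close>

definition vector_outcome :: "nat \<Rightarrow> nat \<Rightarrow> (nat \<Rightarrow> nat) \<Rightarrow> nat \<Rightarrow> nat" where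
  "vector_outcome n i s = (\<lambda>l. if l < n \<and> l \<noteq> i then s (pred_above i l) - 1 else 0)"

lemma vector_outcome_mem:
  assumes "s \<in> PiE {0..<n - 1} (\<lambda>_. {1..m})" "i < n" "0 < m"
  shows "vector_outcome n i s \<in> outcomes n m"
  unfolding outcomes_def
proof (intro CollectI conjI allI impI)
  fix l assume l: "l < n"
  show "vector_outcome n i s l < m"
  proof (cases "l = i")
    case False
    then have "s (pred_above i l) \<in> {1..m}"
      using pred_above_less[OF l False assms(2)] assms(1) by (auto simp: PiE_iff)
    then show ?thesis
      unfolding vector_outcome_def using l False by auto
  qed (simp add: vector_outcome_def assms(3))
qed (simp add: vector_outcome_def)

lemma universal_realizes_context:
  assumes U: "universal m (n - 1) k S" and kn: "k \<le> n - 1" and i: "i < n"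
    and K: "K \<subseteq> {0..<n} - {i}" "card K \<le> k" and t: "t \<in> outcomes n m"
  obtains s where "s \<in> S" "\<forall>l\<in>K. vector_outcome n i s l = t l"
proof -
  let ?K' = "pred_above i ` K"
  have "card ?K' = card K"
    using inj_on_subset[OF inj_on_pred_above] K(1) by (intro card_image) blast
  moreover have "?K' \<subseteq> {0..<n - 1}"
    using K(1) pred_above_less[OF _ _ i] by fastforce
  ultimately obtain K'' where K'': "?K' \<subseteq> K''" "K'' \<subseteq> {0..<n - 1}" "card K'' = k"
    using obtain_superset_with_card[of "{0..<n - 1}" ?K' k] K(2) kn by auto
  define g where "g = (\<lambda>l\<in>K''. if l \<in> ?K' then t (succ_above i l) + 1 else 1)"
  have "t (succ_above i l) + 1 \<in> {1..m}" if "l \<in> K''" for l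
    using outcomes_less[OF t succ_above_less[OF _ i]] K''(2) that by (simp add: Suc_le_eq subset_iff)
  moreover have "1 \<in> {1..m}"
    using outcomes_less[OF t i] by simp
  ultimately have "g \<in> PiE K'' (\<lambda>_. {1..m})"
    unfolding g_def by (auto simp: PiE_iff)
  then have "g \<in> (\<lambda>s. restrict s K'') ` S"
    using U K''(2,3) unfolding universal_def by blast
  then obtain s where s: "s \<in> S" "restrict s K'' = g"
    by blast
  have "vector_outcome n i s l = t l" if l: "l \<in> K" for l
  proof -
    have "pred_above i l \<in> K''" "l < n" "l \<noteq> i"
      using K''(1) K(1) l by auto
    then have "s (pred_above i l) = g (pred_above i l)"
      by (simp add: s(2)[symmetric])
    also have "\<dots> = t l + 1"
      unfolding g_def using l \<open>pred_above i l \<in> K''\<close> \<open>l \<noteq> i\<close> by (simp add: succ_above_pred_above)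
    finally have "s (pred_above i l) = t l + 1" .
    then show ?thesis
      unfolding vector_outcome_def using \<open>l < n\<close> \<open>l \<noteq> i\<close> by simp
  qed
  then show ?thesis
    using that s(1) by blast
qed

lemma universal_subset: "universal m d k S \<Longrightarrow> S \<subseteq> PiE {0..<d} (\<lambda>_. {1..m})"
  unfolding universal_def by blast

lemma finite_universal: "universal m d k S \<Longrightarrow> finite S"
  by (rule finite_subset[OF universal_subset]) (simp_all add: finite_PiE)

lemma power_le_card_universal:
  assumes U: "universal m d k S" and "k \<le> d"
  shows "m ^ k \<le> card S"
proof -
  have "{0..<k} \<subseteq> {0..<d} \<and> card {0..<k} = k"
    using assms(2) by simp
  then have "(\<lambda>s. restrict s {0..<k}) ` S = PiE {0..<k} (\<lambda>_. {1..m})"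
    using U unfolding universal_def by blast
  then have "m ^ k = card ((\<lambda>s. restrict s {0..<k}) ` S)"
    by (simp add: card_PiE)
  also have "\<dots> \<le> card S"
    using finite_universal[OF U] by (rule card_image_le)
  finally show ?thesis .
qed

definition pad_vector :: "nat \<Rightarrow> nat set \<Rightarrow> (nat \<Rightarrow> nat) \<Rightarrow> nat \<Rightarrow> nat" where
  "pad_vector d K g = restrict (\<lambda>l. if l \<in> K then g l else 1) {0..<d}"

lemma pad_vector_mem:
  "g \<in> PiE K (\<lambda>_. {1..m}) \<Longrightarrow> 0 < m \<Longrightarrow> pad_vector d K g \<in> PiE {0..<d} (\<lambda>_. {1..m})"
  unfolding pad_vector_def by (simp add: PiE_iff)

lemma restrict_pad_vector: "K \<subseteq> {0..<d} \<Longrightarrow> g \<in> PiE K B \<Longrightarrow> restrict (pad_vector d K g) K = g"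
  unfolding pad_vector_def by (intro ext) (auto simp: PiE_iff extensional_def subset_iff)

lemma universal_padded_vectors:
  assumes "0 < m"
  shows "universal m d k (\<Union>K\<in>{K. K \<subseteq> {0..<d} \<and> card K = k}. pad_vector d K ` PiE K (\<lambda>_. {1..m}))"
    (is "universal m d k ?S")
  unfolding universal_def
proof (intro conjI allI impI)
  show S_sub: "?S \<subseteq> PiE {0..<d} (\<lambda>_. {1..m})"
    by (intro UN_least image_subsetI) (rule pad_vector_mem[OF _ assms])
  fix K assume K: "K \<subseteq> {0..<d} \<and> card K = k"
  show "(\<lambda>s. restrict s K) ` ?S = PiE K (\<lambda>_. {1..m})"
  proof
    show "(\<lambda>s. restrict s K) ` ?S \<subseteq> PiE K (\<lambda>_. {1..m})"
    proof (rule image_subsetI)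
      fix s assume "s \<in> ?S"
      then have "s \<in> PiE {0..<d} (\<lambda>_. {1..m})"
        using S_sub by blast
      then show "restrict s K \<in> PiE K (\<lambda>_. {1..m})"
        using K by (auto simp: PiE_iff)
    qed
    show "PiE K (\<lambda>_. {1..m}) \<subseteq> (\<lambda>s. restrict s K) ` ?S"
    proof
      fix g assume g: "g \<in> PiE K (\<lambda>_. {1..m})"
      have "pad_vector d K g \<in> ?S"
        using K g by (intro UN_I[of K] imageI) simp_all
      moreover have "g = restrict (pad_vector d K g) K"
        using K g by (simp add: restrict_pad_vector)
      ultimately show "g \<in> (\<lambda>s. restrict s K) ` ?S"
        by (intro image_eqI[where f = "\<lambda>s. restrict s K" and x = "pad_vector d K g"]) simp_all
    qed
  qed
qed

lemma card_padded_vectors: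
  "card (\<Union>K\<in>{K. K \<subseteq> {0..<d} \<and> card K = k}. pad_vector d K ` PiE K (\<lambda>_. {1..m}))
     \<le> (d choose k) * m ^ k"
proof -
  let ?KK = "{K. K \<subseteq> {0..<d} \<and> card K = k}"
  have "card (\<Union>K\<in>?KK. pad_vector d K ` PiE K (\<lambda>_. {1..m}))
      \<le> (\<Sum>K\<in>?KK. card (pad_vector d K ` PiE K (\<lambda>_. {1..m})))"
    by (rule card_UN_le) simp
  also have "\<dots> \<le> (\<Sum>K\<in>?KK. m ^ k)"
  proof (rule sum_mono)
    fix K assume K: "K \<in> ?KK"
    then have fin: "finite K"
      using finite_subset[of K "{0..<d}"] by simp
    have "card (pad_vector d K ` PiE K (\<lambda>_. {1..m})) \<le> card (PiE K (\<lambda>_. {1..m}))"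
      using fin by (intro card_image_le finite_PiE) simp_all
    also have "\<dots> = m ^ k"
      using K fin by (simp add: card_PiE)
    finally show "card (pad_vector d K ` PiE K (\<lambda>_. {1..m})) \<le> m ^ k" .
  qed
  also have "\<dots> = (d choose k) * m ^ k"
    using n_subsets[of "{0..<d}" k] by simp
  finally show ?thesis .
qed

lemma finite_universal_cards: "finite {card S | S. universal m d k S}"
proof (rule finite_subset)
  have "card S \<le> card (PiE {0..<d} (\<lambda>_. {1..m}))" if "universal m d k S" for S
    using universal_subset[OF that] by (rule card_mono[rotated]) (simp add: finite_PiE)
  then show "{card S | S. universal m d k S} \<subseteq> {..card (PiE {0..<d} (\<lambda>_. {1..m}))}"
    by blast
qed simp

lemma U_le_card: "universal m (n - 1) k S \<Longrightarrow> U m n k \<le> card S"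
  unfolding U_def using finite_universal_cards by (blast intro: Min_le)

lemma obtain_universal_card_U:
  assumes "0 < m"
  obtains S where "universal m (n - 1) k S" "card S = U m n k"
proof -
  have "{card S | S. universal m (n - 1) k S} \<noteq> {}"
    using universal_padded_vectors[OF assms] by blast
  then have "U m n k \<in> {card S | S. universal m (n - 1) k S}"
    unfolding U_def using finite_universal_cards by (rule Min_in[rotated])
  then obtain S where "universal m (n - 1) k S" "U m n k = card S"
    by blast
  then show ?thesis
    using that by simp
qed

lemma power_le_U:
  assumes "0 < m" "k \<le> n - 1"
  shows "m ^ k \<le> U m n k"
proof -
  obtain S where "universal m (n - 1) k S" "card S = U m n k"
    using obtain_universal_card_U[OF assms(1)] .
  then show ?thesis
    using power_le_card_universal assms(2) by metis
qed

lemma U_le_choose_power: "0 < m \<Longrightarrow> U m n k \<le> ((n - 1) choose k) * m ^ k"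
  by (rule le_trans[OF U_le_card[OF universal_padded_vectors] card_padded_vectors])

section \<open>Upper bounds\<close>

lemma card_outcomes_fixing:
  assumes i: "i < n"
  shows "card {t \<in> outcomes n m. t i = 0} \<le> m ^ (n - 1)"
proof -
  let ?A = "{0..<n} - {i}"
  have "inj_on (\<lambda>t. restrict t ?A) {t \<in> outcomes n m. t i = 0}"
  proof (rule inj_onI)
    fix t t' assume t: "t \<in> {t \<in> outcomes n m. t i = 0}" and t': "t' \<in> {t \<in> outcomes n m. t i = 0}"
      and eq: "restrict t ?A = restrict t' ?A"
    show "t = t'"
    proof
      fix l
      show "t l = t' l"
      proof (cases "l \<in> ?A")
        case True
        then show ?thesis using eq by (metis restrict_apply')
      next
        case False
        then show ?thesis using t t' unfolding outcomes_def by auto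
      qed
    qed
  qed
  then have "card {t \<in> outcomes n m. t i = 0} = card ((\<lambda>t. restrict t ?A) ` {t \<in> outcomes n m. t i = 0})"
    by (rule card_image[symmetric])
  also have "\<dots> \<le> card (PiE ?A (\<lambda>_. {0..<m}))"
  proof (rule card_mono)
    show "(\<lambda>t. restrict t ?A) ` {t \<in> outcomes n m. t i = 0} \<subseteq> PiE ?A (\<lambda>_. {0..<m})"
      unfolding outcomes_def by (intro image_subsetI) (auto simp: restrict_PiE_iff)
  qed (simp add: finite_PiE)
  also have "\<dots> = m ^ (n - 1)"
    using i by (simp add: card_PiE)
  finally show ?thesis .
qed

lemma TD_C_ac_le_full:
  assumes X: "swap_space n m X"
  shows "TD X (C_ac n m k X) \<le> n * m ^ (n - 1) * (m - 1)"
proof (rule TD_C_ac_le[OF X])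
  fix Pa ord assume net: "complete_acyclic_cpnet n m k Pa ord"
  let ?T = "\<lambda>i. {t \<in> outcomes n m. t i = 0}"
  obtain S where S: "teaching_set X (C_ac n m k X) (cp_concept n m X ord) S"
      "card S \<le> (\<Sum>i<n. card (?T i)) * (m - 1) + card ({} :: (((nat \<Rightarrow> nat) \<times> (nat \<Rightarrow> nat)) \<times> bool) set)"
  proof (atomize_elim, rule teaching_set_from_contexts[OF X net])
    fix Pa' ord' assume net': "complete_acyclic_cpnet n m k Pa' ord'"
    show "\<forall>i<n. \<forall>t\<in>outcomes n m. \<exists>t'\<in>?T i. \<forall>l\<in>Pa i \<union> Pa' i. t' l = t l"
    proof (intro allI impI ballI)
      fix i t assume i: "i < n" and t: "t \<in> outcomes n m"
      have "t(i := 0) \<in> ?T i"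
        using outcomes_upd[OF t i] outcomes_less[OF t i] by auto
      moreover have "\<forall>l\<in>Pa i \<union> Pa' i. (t(i := 0)) l = t l"
        using cpnet_parents[OF net i] cpnet_parents[OF net' i] by auto
      ultimately show "\<exists>t'\<in>?T i. \<forall>l\<in>Pa i \<union> Pa' i. t' l = t l"
        by blast
    qed
  qed auto
  have "card S \<le> (\<Sum>i<n. card (?T i)) * (m - 1)"
    using S(2) by simp
  also have "\<dots> \<le> (\<Sum>i<n. m ^ (n - 1)) * (m - 1)"
    using card_outcomes_fixing by (intro mult_le_mono1 sum_mono) simp
  finally show "\<exists>S. teaching_set X (C_ac n m k X) (cp_concept n m X ord) S \<and>
      card S \<le> n * m ^ (n - 1) * (m - 1)"
    using S(1) by auto
qed

lemma cpnet_one_parent_cases: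
  assumes "complete_acyclic_cpnet n m 1 Pa ord" "i < n"
  obtains "Pa i = {}" | j where "Pa i = {j}" "j < n" "j \<noteq> i"
proof (cases "Pa i = {}")
  case False
  then obtain j where j: "j \<in> Pa i"
    by blast
  have "card (Pa i) \<le> Suc 0"
    using cpnet_card_parents[OF assms] by simp
  then have "Pa i = {j}"
    using j card_le_Suc0_iff_eq[OF finite_cpnet_parents[OF assms]] by blast
  moreover have "j < n" "j \<noteq> i"
    using j cpnet_parents[OF assms] by auto
  ultimately show ?thesis
    using that(2) by blast
qed (rule that(1))

text \<open>A parentless variable gets the constant contexts: each of them agrees with any outcome on
  any single variable, whichever parent the other net assigns.\<close>

definition one_parent_contexts :: "nat \<Rightarrow> nat \<Rightarrow> (nat \<Rightarrow> nat set) \<Rightarrow> nat \<Rightarrow> (nat \<Rightarrow> nat) set" where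
  "one_parent_contexts n m Pa i =
     (if Pa i = {} then (\<lambda>a l. if l < n then a else 0) ` {..<m}
      else (\<lambda>a. (\<lambda>_. 0)(the_elem (Pa i) := a)) ` {..<m})"

lemma card_one_parent_contexts: "card (one_parent_contexts n m Pa i) \<le> m"
  unfolding one_parent_contexts_def using card_image_le[of "{..<m}"] by auto

lemma one_parent_contexts_subset:
  assumes net: "complete_acyclic_cpnet n m 1 Pa ord" and i: "i < n"
  shows "one_parent_contexts n m Pa i \<subseteq> outcomes n m"
  using net i
proof (cases rule: cpnet_one_parent_cases)
  case 1
  then show ?thesis
    unfolding one_parent_contexts_def outcomes_def by auto
next
  case (2 j)
  then show ?thesis
    unfolding one_parent_contexts_def outcomes_def by auto
qed

lemma one_parent_contexts_cover:
  assumes net: "complete_acyclic_cpnet n m 1 Pa ord" and net': "complete_acyclic_cpnet n m 1 Pa' ord'"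
    and agree: "\<forall>t\<in>one_parent_contexts n m Pa i. ord' i t = ord i t"
    and i: "i < n" and t: "t \<in> outcomes n m"
  shows "\<exists>t'\<in>one_parent_contexts n m Pa i. \<forall>l\<in>Pa i \<union> Pa' i. t' l = t l"
  using net i
proof (cases rule: cpnet_one_parent_cases)
  case 1
  obtain j where j: "j < n" "Pa' i \<subseteq> {j}"
  proof (cases rule: cpnet_one_parent_cases[OF net' i])
    case 1
    then show ?thesis using that[of i] i by blast
  next
    case (2 j)
    then show ?thesis using that[of j] by blast
  qed
  let ?t' = "\<lambda>l. if l < n then t j else 0"
  have "?t' \<in> one_parent_contexts n m Pa i"
    unfolding one_parent_contexts_def using 1 outcomes_less[OF t j(1)] by auto
  moreover have "\<forall>l\<in>Pa i \<union> Pa' i. ?t' l = t l"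
    using 1 j by auto
  ultimately show ?thesis
    by (rule rev_bexI[where x = ?t'])
next
  case (2 j)
  let ?u = "\<lambda>a. (\<lambda>_. 0)(j := a)"
  have u_mem: "?u a \<in> one_parent_contexts n m Pa i" if "a < m" for a
    unfolding one_parent_contexts_def using 2(1) that by auto
  have u_out: "?u a \<in> outcomes n m" if "a < m" for a
    using one_parent_contexts_subset[OF net i] u_mem[OF that] by blast
  obtain w w' where w: "w \<in> outcomes n m" "w' \<in> outcomes n m" "\<And>l. l \<noteq> j \<Longrightarrow> w l = w' l"
    "ord i w \<noteq> ord i w'"
    using cpnet_nondummy[OF net i] 2(1) by blast
  have wj: "w j < m" "w' j < m"
    using outcomes_less w(1,2) 2(2) by blast+
  have "ord i (?u (w j)) = ord i w"
    by (rule cpnet_order_cong[OF net i u_out[OF wj(1)] w(1)]) (simp add: 2(1))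
  moreover have "ord i (?u (w' j)) = ord i w'"
    by (rule cpnet_order_cong[OF net i u_out[OF wj(2)] w(2)]) (simp add: 2(1))
  ultimately have "ord' i (?u (w j)) \<noteq> ord' i (?u (w' j))"
    using agree u_mem[OF wj(1)] u_mem[OF wj(2)] w(4) by simp
  then have "j \<in> Pa' i"
    by (rule cpnet_parent_if_order_differs[OF net' i u_out[OF wj(1)] u_out[OF wj(2)], rotated]) simp
  then have "Pa' i = {j}"
    by (cases rule: cpnet_one_parent_cases[OF net' i]) auto
  moreover have "t j < m"
    using outcomes_less[OF t 2(2)] .
  ultimately show ?thesis
    using 2(1) u_mem by (intro bexI[where x = "?u (t j)"]) auto
qed

lemma TD_C_ac_1_le:
  assumes X: "swap_space n m X"
  shows "TD X (C_ac n m 1 X) \<le> n * m * (m - 1)"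
proof (rule TD_C_ac_le[OF X])
  fix Pa ord assume net: "complete_acyclic_cpnet n m 1 Pa ord"
  let ?T = "one_parent_contexts n m Pa"
  have "\<exists>S. teaching_set X (C_ac n m 1 X) (cp_concept n m X ord) S \<and>
      card S \<le> (\<Sum>i<n. card (?T i)) * (m - 1) + card ({} :: (((nat \<Rightarrow> nat) \<times> (nat \<Rightarrow> nat)) \<times> bool) set)"
  proof (rule teaching_set_from_contexts[OF X net])
    fix Pa' ord' assume "complete_acyclic_cpnet n m 1 Pa' ord'" "\<forall>i<n. \<forall>t\<in>?T i. ord' i t = ord i t"
    then show "\<forall>i<n. \<forall>t\<in>outcomes n m. \<exists>t'\<in>?T i. \<forall>l\<in>Pa i \<union> Pa' i. t' l = t l"
      using one_parent_contexts_cover[OF net] by blast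
  qed (use one_parent_contexts_subset[OF net] in simp_all)
  then obtain S where S: "teaching_set X (C_ac n m 1 X) (cp_concept n m X ord) S"
      "card S \<le> (\<Sum>i<n. card (?T i)) * (m - 1)"
    by auto
  have "(\<Sum>i<n. card (?T i)) \<le> n * m"
    using sum_mono[of "{..<n}" "\<lambda>i. card (?T i)" "\<lambda>_. m"] card_one_parent_contexts by simp
  then have "card S \<le> n * m * (m - 1)"
    using S(2) mult_le_mono1 le_trans by blast
  then show "\<exists>S. teaching_set X (C_ac n m 1 X) (cp_concept n m X ord) S \<and> card S \<le> n * m * (m - 1)"
    using S(1) by blast
qed

lemma exists_parent_example:
  assumes X: "swap_space n m X" and m: "0 < m" and kn: "k \<le> n - 1"
    and net: "complete_acyclic_cpnet n m k Pa ord" and U: "universal m (n - 1) k S"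
    and i: "i < n" and j: "j \<in> Pa i"
  obtains A where "A \<subseteq> (\<lambda>x. (x, cp_concept n m X ord x)) ` X" "card A \<le> 1"
    "\<And>Pa' ord'. complete_acyclic_cpnet n m k Pa' ord' \<Longrightarrow>
       \<forall>t\<in>vector_outcome n i ` S. ord' i t = ord i t \<Longrightarrow>
       \<forall>(x, l)\<in>A. cp_concept n m X ord' x = l \<Longrightarrow> j \<in> Pa' i"
proof -
  obtain w w' where w: "w \<in> outcomes n m" "w' \<in> outcomes n m" "\<And>l. l \<noteq> j \<Longrightarrow> w l = w' l"
    "ord i w \<noteq> ord i w'"
    using cpnet_nondummy[OF net i j] by blast
  obtain s where s: "s \<in> S" "\<forall>l\<in>Pa i. vector_outcome n i s l = w l"
    using universal_realizes_context[OF U kn i cpnet_parents[OF net i] cpnet_card_parents[OF net i] w(1)] .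
  let ?u = "vector_outcome n i s"
  let ?u' = "?u(j := w' j)"
  have jn: "j < n"
    using cpnet_parents[OF net i] j by auto
  have u: "?u \<in> outcomes n m"
    using vector_outcome_mem[OF _ i m] universal_subset[OF U] s(1) by blast
  have u': "?u' \<in> outcomes n m"
    using outcomes_upd[OF u jn outcomes_less[OF w(2) jn]] .
  have "ord i ?u = ord i w"
    using s(2) by (intro cpnet_order_cong[OF net i u w(1)]) simp
  moreover have "ord i ?u' = ord i w'"
    using s(2) w(3) by (intro cpnet_order_cong[OF net i u' w(2)]) auto
  ultimately have "\<not> ord i ?u \<subseteq> ord i ?u'"
    using strict_total_dom_eq_if_subset[OF cpnet_order[OF net i u] cpnet_order[OF net i u']] w(4)
    by auto
  then obtain a b where ab: "(a, b) \<in> ord i ?u" "(a, b) \<notin> ord i ?u'"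
    by auto
  have ab_dom: "a < m" "b < m" "a \<noteq> b"
    using ab(1) strict_total_dom_bounded strict_total_dom_irrefl cpnet_order[OF net i u] by blast+
  let ?A = "swap_examples X (cp_concept n m X ord) i ?u' a b"
  show ?thesis
  proof (rule that[of ?A])
    show "?A \<subseteq> (\<lambda>x. (x, cp_concept n m X ord x)) ` X"
      by (rule swap_examples_subset)
    show "card ?A \<le> 1"
      using card_swap_examples[OF X u' i ab_dom(1,2)] .
    fix Pa' ord' assume net': "complete_acyclic_cpnet n m k Pa' ord'"
      and agree_u: "\<forall>t\<in>vector_outcome n i ` S. ord' i t = ord i t"
      and agree_A: "\<forall>(x, l)\<in>?A. cp_concept n m X ord' x = l"
    \<comment> \<open>\<open>ord'\<close> separates \<open>?u\<close> and \<open>?u'\<close>, which differ only at \<open>j\<close>\<close>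
    have "(a, b) \<notin> ord' i ?u'"
      using cpnet_order_pair_eq_if_swap_examples[OF X net net' u' i ab_dom agree_A] ab(2) by blast
    moreover have "(a, b) \<in> ord' i ?u"
      using agree_u s(1) ab(1) by auto
    ultimately show "j \<in> Pa' i"
      by (intro cpnet_parent_if_order_differs[OF net' i u u', of j]) auto
  qed
qed

lemma exists_parent_examples:
  assumes X: "swap_space n m X" and m: "0 < m" and kn: "k \<le> n - 1"
    and net: "complete_acyclic_cpnet n m k Pa ord" and U: "universal m (n - 1) k S"
  obtains E where "E \<subseteq> (\<lambda>x. (x, cp_concept n m X ord x)) ` X" "card E \<le> e_max n k"
    "\<And>Pa' ord'. complete_acyclic_cpnet n m k Pa' ord' \<Longrightarrow>
       \<forall>i<n. \<forall>t\<in>vector_outcome n i ` S. ord' i t = ord i t \<Longrightarrow>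
       \<forall>(x, l)\<in>E. cp_concept n m X ord' x = l \<Longrightarrow> \<forall>i<n. Pa i \<subseteq> Pa' i"
proof -
  let ?G = "{(j, i). i < n \<and> j \<in> Pa i}"
  let ?P = "\<lambda>e A. A \<subseteq> (\<lambda>x. (x, cp_concept n m X ord x)) ` X \<and> card A \<le> 1 \<and>
     (\<forall>Pa' ord'. complete_acyclic_cpnet n m k Pa' ord' \<longrightarrow>
        (\<forall>t\<in>vector_outcome n (snd e) ` S. ord' (snd e) t = ord (snd e) t) \<longrightarrow>
        (\<forall>(x, l)\<in>A. cp_concept n m X ord' x = l) \<longrightarrow> fst e \<in> Pa' (snd e))"
  have "\<forall>e\<in>?G. \<exists>A. ?P e A"
  proof
    fix e assume eG: "e \<in> ?G"
    obtain j i where e: "e = (j, i)" "i < n" "j \<in> Pa i"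
      using eG by blast
    obtain A where "A \<subseteq> (\<lambda>x. (x, cp_concept n m X ord x)) ` X" "card A \<le> 1"
      "\<And>Pa' ord'. complete_acyclic_cpnet n m k Pa' ord' \<Longrightarrow>
         \<forall>t\<in>vector_outcome n i ` S. ord' i t = ord i t \<Longrightarrow>
         \<forall>(x, l)\<in>A. cp_concept n m X ord' x = l \<Longrightarrow> j \<in> Pa' i"
      using exists_parent_example[OF X m kn net U e(2,3)] by blast
    then show "\<exists>A. ?P e A"
      using e(1) by auto
  qed
  then obtain f where f: "\<forall>e\<in>?G. ?P e (f e)"
    by (rule bchoice[THEN exE])
  let ?E = "\<Union>e\<in>?G. f e"
  show ?thesis
  proof (rule that[of ?E])
    show "?E \<subseteq> (\<lambda>x. (x, cp_concept n m X ord x)) ` X"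
      using f by blast
    have "card ?E \<le> (\<Sum>e\<in>?G. card (f e))"
      using finite_cpnet_graph[OF net] by (rule card_UN_le)
    also have "\<dots> \<le> (\<Sum>e\<in>?G. 1)"
      using f by (intro sum_mono) blast
    also have "\<dots> \<le> e_max n k"
      using card_cpnet_edges[OF net] kn by simp
    finally show "card ?E \<le> e_max n k" .
    fix Pa' ord' assume net': "complete_acyclic_cpnet n m k Pa' ord'"
      and agree_T: "\<forall>i<n. \<forall>t\<in>vector_outcome n i ` S. ord' i t = ord i t"
      and agree_E: "\<forall>(x, l)\<in>?E. cp_concept n m X ord' x = l"
    show "\<forall>i<n. Pa i \<subseteq> Pa' i"
    proof (intro allI impI subsetI)
      fix i j assume i: "i < n" and j: "j \<in> Pa i"
      then have e: "(j, i) \<in> ?G"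
        by simp
      then have "\<forall>(x, l)\<in>f (j, i). cp_concept n m X ord' x = l"
        using agree_E by blast
      then show "j \<in> Pa' i"
        using f e net' agree_T i by fastforce
    qed
  qed
qed

lemma TD_C_ac_le_universal:
  assumes X: "swap_space n m X" and m: "0 < m" and kn: "k \<le> n - 1"
  shows "TD X (C_ac n m k X) \<le> e_max n k + n * (m - 1) * U m n k"
proof (rule TD_C_ac_le[OF X])
  fix Pa ord assume net: "complete_acyclic_cpnet n m k Pa ord"
  obtain S where U: "universal m (n - 1) k S" and card_S: "card S = U m n k"
    using obtain_universal_card_U[OF m] .
  let ?T = "\<lambda>i. vector_outcome n i ` S"
  obtain E where E: "E \<subseteq> (\<lambda>x. (x, cp_concept n m X ord x)) ` X" "card E \<le> e_max n k"
    and parents: "\<And>Pa' ord'. complete_acyclic_cpnet n m k Pa' ord' \<Longrightarrow>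
       \<forall>i<n. \<forall>t\<in>?T i. ord' i t = ord i t \<Longrightarrow>
       \<forall>(x, l)\<in>E. cp_concept n m X ord' x = l \<Longrightarrow> \<forall>i<n. Pa i \<subseteq> Pa' i"
    using exists_parent_examples[OF X m kn net U] by blast
  have "\<exists>S'. teaching_set X (C_ac n m k X) (cp_concept n m X ord) S' \<and>
      card S' \<le> (\<Sum>i<n. card (?T i)) * (m - 1) + card E"
  proof (rule teaching_set_from_contexts[OF X net _ E(1)])
    show "?T i \<subseteq> outcomes n m" if "i < n" for i
      using vector_outcome_mem[OF _ that m] universal_subset[OF U] by blast
    fix Pa' ord' assume net': "complete_acyclic_cpnet n m k Pa' ord'"
      and agree_T: "\<forall>i<n. \<forall>t\<in>?T i. ord' i t = ord i t"
      and agree_E: "\<forall>(x, l)\<in>E. cp_concept n m X ord' x = l"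
    show "\<forall>i<n. \<forall>t\<in>outcomes n m. \<exists>t'\<in>?T i. \<forall>l\<in>Pa i \<union> Pa' i. t' l = t l"
    proof (intro allI impI ballI)
      fix i t assume i: "i < n" and t: "t \<in> outcomes n m"
      obtain s where "s \<in> S" "\<forall>l\<in>Pa' i. vector_outcome n i s l = t l"
        using universal_realizes_context[OF U kn i cpnet_parents[OF net' i]
            cpnet_card_parents[OF net' i] t] .
      moreover have "Pa i \<subseteq> Pa' i"
        using parents[OF net' agree_T agree_E] i by blast
      ultimately show "\<exists>t'\<in>?T i. \<forall>l\<in>Pa i \<union> Pa' i. t' l = t l"
        by blast
    qed
  qed
  then obtain S' where S': "teaching_set X (C_ac n m k X) (cp_concept n m X ord) S'"
    "card S' \<le> (\<Sum>i<n. card (?T i)) * (m - 1) + card E"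
    by blast
  have "(\<Sum>i<n. card (?T i)) * (m - 1) \<le> (\<Sum>i<n. card S) * (m - 1)"
    using finite_universal[OF U] by (intro mult_le_mono1 sum_mono card_image_le)
  then have "card S' \<le> e_max n k + n * (m - 1) * U m n k"
    using S'(2) E(2) card_S by (simp add: algebra_simps)
  then show "\<exists>S'. teaching_set X (C_ac n m k X) (cp_concept n m X ord) S' \<and>
      card S' \<le> e_max n k + n * (m - 1) * U m n k"
    using S'(1) by blast
qed

lemma TD_C_ac_0_le:
  assumes X: "swap_space n m X" and m: "0 < m"
  shows "TD X (C_ac n m 0 X) \<le> n * (m - 1)"
proof -
  have "U m n 0 \<le> 1"
    using U_le_choose_power[OF m, of n 0] by simp
  then have "e_max n 0 + n * (m - 1) * U m n 0 \<le> n * (m - 1)"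
    using mult_le_mono2[of "U m n 0" 1 "n * (m - 1)"] by (simp add: e_max_def binomial_eq_0)
  then show ?thesis
    using TD_C_ac_le_universal[OF X m, of 0] by simp
qed

section \<open>Lower bound\<close>

definition outcome_vector :: "nat \<Rightarrow> nat \<Rightarrow> (nat \<Rightarrow> nat) \<Rightarrow> nat \<Rightarrow> nat" where
  "outcome_vector n i w = (\<lambda>l\<in>{0..<n - 1}. w (succ_above i l) + 1)"

lemma outcome_vector_mem:
  assumes "w \<in> outcomes n m" "i < n"
  shows "outcome_vector n i w \<in> PiE {0..<n - 1} (\<lambda>_. {1..m})"
  unfolding outcome_vector_def using outcomes_less[OF assms(1) succ_above_less[OF _ assms(2)]]
  by (auto simp: Suc_le_eq)

lemma outcome_vector_vector_outcome:
  assumes "s \<in> PiE {0..<n - 1} (\<lambda>_. {1..m})"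
  shows "outcome_vector n i (vector_outcome n i s) = s"
proof
  fix l
  show "outcome_vector n i (vector_outcome n i s) l = s l"
  proof (cases "l < n - 1")
    case True
    then have "s l \<ge> 1" "succ_above i l < n"
      using assms succ_above_less[of l n i] unfolding succ_above_def by (auto simp: PiE_iff)
    then show ?thesis
      unfolding outcome_vector_def vector_outcome_def using True succ_above_neq by simp
  next
    case False
    then show ?thesis
      using assms unfolding outcome_vector_def by (auto simp: PiE_iff extensional_def)
  qed
qed

definition spoiler_parents :: "nat \<Rightarrow> nat set \<Rightarrow> nat \<Rightarrow> nat set" where
  "spoiler_parents i K = (\<lambda>_. {})(i := succ_above i ` K)"

definition spoiler_order ::
  "nat \<Rightarrow> nat \<Rightarrow> nat \<Rightarrow> nat set \<Rightarrow> (nat \<Rightarrow> nat) \<Rightarrow> nat \<Rightarrow> nat \<Rightarrow> (nat \<Rightarrow> nat) \<Rightarrow> (nat \<times> nat) set"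
  where
  "spoiler_order n m i K g a = (\<lambda>_ _. rank_order m id)(i := (\<lambda>w.
     if restrict (outcome_vector n i w) K = g then rank_order m (transpose a (Suc a)) else rank_order m id))"

lemma restrict_outcome_vector_cong:
  assumes "K \<subseteq> {0..<n - 1}" "\<And>l. l \<in> K \<Longrightarrow> w (succ_above i l) = w' (succ_above i l)"
  shows "restrict (outcome_vector n i w) K = restrict (outcome_vector n i w') K"
  using assms unfolding outcome_vector_def by (intro ext) auto

lemma restrict_outcome_vector_pad:
  assumes "K \<subseteq> {0..<n - 1}" "g \<in> PiE K (\<lambda>_. {1..m})" "0 < m"
  shows "restrict (outcome_vector n i (vector_outcome n i (pad_vector (n - 1) K g))) K = g"
  using restrict_pad_vector[OF assms(1,2)]
  by (simp only: outcome_vector_vector_outcome[OF pad_vector_mem[OF assms(2,3)]])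

lemma spoiler_order_nondummy:
  assumes m: "2 \<le> m" and i: "i < n" and a: "Suc a < m" and K: "K \<subseteq> {0..<n - 1}"
    and g: "g \<in> PiE K (\<lambda>_. {1..m})" and l0: "l0 \<in> K"
  shows "\<exists>w\<in>outcomes n m. \<exists>w'\<in>outcomes n m. (\<forall>p. p \<noteq> succ_above i l0 \<longrightarrow> w p = w' p) \<and>
    spoiler_order n m i K g a i w \<noteq> spoiler_order n m i K g a i w'"
proof -
  let ?j = "succ_above i l0"
  let ?w = "vector_outcome n i (pad_vector (n - 1) K g)"
  let ?w' = "?w(?j := if ?w ?j = 0 then 1 else 0)"
  have jn: "?j < n"
    using l0 K succ_above_less[OF _ i] by auto
  have w: "?w \<in> outcomes n m"
    using vector_outcome_mem[OF pad_vector_mem[OF g] i] m by simp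
  have w': "?w' \<in> outcomes n m"
    using outcomes_upd[OF w jn] m by simp
  have match: "restrict (outcome_vector n i ?w) K = g"
    using restrict_outcome_vector_pad[OF K g] m by simp
  have "outcome_vector n i ?w' l0 \<noteq> outcome_vector n i ?w l0"
    using l0 K unfolding outcome_vector_def by auto
  then have "restrict (outcome_vector n i ?w') K \<noteq> g"
    using match l0 by (metis restrict_apply')
  moreover have "(Suc a, a) \<in> rank_order m id" "(Suc a, a) \<notin> rank_order m (transpose a (Suc a))"
    unfolding rank_order_def using a by auto
  ultimately have "spoiler_order n m i K g a i ?w \<noteq> spoiler_order n m i K g a i ?w'"
    unfolding spoiler_order_def using match by auto
  then show ?thesis
    using w w' by (intro bexI[of _ ?w] bexI[of _ ?w']) auto
qed

lemma cpnet_spoiler: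
  assumes m: "2 \<le> m" and i: "i < n" and a: "Suc a < m" and K: "K \<subseteq> {0..<n - 1}" "card K = k"
    and g: "g \<in> PiE K (\<lambda>_. {1..m})"
  shows "complete_acyclic_cpnet n m k (spoiler_parents i K) (spoiler_order n m i K g a)"
proof (rule complete_acyclic_cpnetI)
  fix l assume "l < n"
  show "spoiler_parents i K l \<subseteq> {0..<n} - {l}"
    unfolding spoiler_parents_def using K(1) succ_above_less[OF _ i] succ_above_neq by auto
  show "card (spoiler_parents i K l) \<le> k"
    unfolding spoiler_parents_def using card_image[OF inj_on_subset[OF inj_succ_above]] K(2) by simp
next
  show "acyclic {(j, l). l < n \<and> j \<in> spoiler_parents i K l}"
    by (rule acyclicI_order[where f = "\<lambda>l. if l = i then 0 else 1 :: nat"])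
      (auto simp: spoiler_parents_def succ_above_neq split: if_splits)
next
  fix l w assume "l < n" "w \<in> outcomes n m"
  show "strict_total_dom m (spoiler_order n m i K g a l w)"
    unfolding spoiler_order_def by (simp add: strict_total_dom_rank_order inj_transpose)
next
  fix l w w' assume "l < n" "w \<in> outcomes n m" "w' \<in> outcomes n m"
    and "\<And>j. j \<in> spoiler_parents i K l \<Longrightarrow> w j = w' j"
  then show "spoiler_order n m i K g a l w = spoiler_order n m i K g a l w'"
    unfolding spoiler_order_def spoiler_parents_def
    using restrict_outcome_vector_cong[OF K(1), of w i w'] by (cases "l = i") auto
next
  fix l j assume "l < n" and j: "j \<in> spoiler_parents i K l"
  then have "l = i"
    unfolding spoiler_parents_def by (cases "l = i") auto
  then obtain l0 where "l0 \<in> K" "j = succ_above i l0"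
    using j unfolding spoiler_parents_def by auto
  then show "\<exists>w\<in>outcomes n m. \<exists>w'\<in>outcomes n m.
      (\<forall>p. p \<noteq> j \<longrightarrow> w p = w' p) \<and> spoiler_order n m i K g a l w \<noteq> spoiler_order n m i K g a l w'"
    using spoiler_order_nondummy[OF m i a K(1) g] \<open>l = i\<close> by blast
qed

definition adjacent_swaps :: "nat \<Rightarrow> nat \<Rightarrow> nat \<Rightarrow> nat \<Rightarrow> ((nat \<Rightarrow> nat) \<times> (nat \<Rightarrow> nat)) set" where
  "adjacent_swaps n m i a =
     {x. \<exists>t\<in>outcomes n m. x = (t(i := a), t(i := Suc a)) \<or> x = (t(i := Suc a), t(i := a))}"

lemma adjacent_swaps_unique:
  assumes "x \<in> adjacent_swaps n m i a" "x \<in> adjacent_swaps n m i' a'"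
  shows "i = i' \<and> a = a'"
proof -
  have char: "{l. fst x l \<noteq> snd x l} = {i} \<and> min (fst x i) (snd x i) = a"
    if "x \<in> adjacent_swaps n m i a" for i a
    using that unfolding adjacent_swaps_def by (auto split: if_splits)
  show ?thesis
    using char[OF assms(1)] char[OF assms(2)] by auto
qed

lemma cp_concept_spoiler_eq:
  assumes X: "swap_space n m X" and m: "2 \<le> m" and i: "i < n" and a: "Suc a < m"
    and K: "K \<subseteq> {0..<n - 1}" "card K = k" and g: "g \<in> PiE K (\<lambda>_. {1..m})" and x: "x \<in> X"
    and no_match: "x \<in> adjacent_swaps n m i a \<Longrightarrow> restrict (outcome_vector n i (snd x)) K \<noteq> g"
  shows "cp_concept n m X (spoiler_order n m i K g a) x = cp_concept n m X (\<lambda>_ _. rank_order m id) x"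
proof -
  obtain i' where i': "i' < n" "fst x = (snd x)(i' := fst x i')" "fst x i' \<noteq> snd x i'"
    "fst x \<in> outcomes n m" "snd x \<in> outcomes n m"
    using is_swapE X x unfolding swap_space_def by metis
  let ?\<alpha> = "fst x i'" and ?\<beta> = "snd x i'"
  have "(?\<alpha>, ?\<beta>) \<in> spoiler_order n m i K g a i' (snd x) \<longleftrightarrow> (?\<alpha>, ?\<beta>) \<in> rank_order m id"
  proof (cases "i' = i \<and> restrict (outcome_vector n i (snd x)) K = g")
    case True
    have "x = ((snd x)(i := ?\<alpha>), (snd x)(i := ?\<beta>))"
      using i'(2) True by (simp add: prod_eq_iff)
    then have "{?\<alpha>, ?\<beta>} = {a, Suc a} \<Longrightarrow> x \<in> adjacent_swaps n m i a"
      unfolding adjacent_swaps_def using i'(5) by (auto simp: doubleton_eq_iff)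
    then have "{?\<alpha>, ?\<beta>} \<noteq> {a, Suc a}"
      using no_match True by blast
    then show ?thesis
      unfolding spoiler_order_def using True rank_order_transpose_iff i'(3) by simp
  qed (auto simp: spoiler_order_def)
  then show ?thesis
    using cp_concept_swap_iff[OF cpnet_spoiler[OF m i a K g] i'(1-5) x]
      cp_concept_swap_iff[OF cpnet_without_parents i'(1-5) x] by simp
qed

lemma cp_concept_spoiler_ne:
  assumes X: "swap_space n m X" and m: "2 \<le> m" and i: "i < n" and a: "Suc a < m"
    and K: "K \<subseteq> {0..<n - 1}" "card K = k" and g: "g \<in> PiE K (\<lambda>_. {1..m})"
  shows "cp_concept n m X (spoiler_order n m i K g a) \<noteq> cp_concept n m X (\<lambda>_ _. rank_order m id)"
proof -
  let ?t = "vector_outcome n i (pad_vector (n - 1) K g)"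
  have t: "?t \<in> outcomes n m"
    using vector_outcome_mem[OF pad_vector_mem[OF g] i] m by simp
  have "spoiler_order n m i K g a i ?t = rank_order m (transpose a (Suc a))"
    unfolding spoiler_order_def using restrict_outcome_vector_pad[OF K(1) g] m by simp
  then have iff: "(p, q) \<in> spoiler_order n m i K g a i ?t \<longleftrightarrow> (q, p) \<in> rank_order m id"
    if "{p, q} = {a, Suc a}" for p q
    using that a unfolding rank_order_def by (auto simp: doubleton_eq_iff)
  have am: "a < m" "a \<noteq> Suc a"
    using a by simp_all
  have spoiler: "(a, Suc a) \<in> spoiler_order n m i K g a i ?t" "(Suc a, a) \<notin> spoiler_order n m i K g a i ?t"
    using iff[of a "Suc a"] iff[of "Suc a" a] a unfolding rank_order_def by auto
  have parentless: "(a, Suc a) \<notin> rank_order m id" "(Suc a, a) \<in> rank_order m id"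
    using a unfolding rank_order_def by auto
  note net' = cpnet_spoiler[OF m i a K g] and net0 = cpnet_without_parents
  have "(?t(i := a), ?t(i := Suc a)) \<in> X \<or> (?t(i := Suc a), ?t(i := a)) \<in> X"
    using swap_space_mem_iff[OF X is_swap_upd[OF t i am(1) a am(2)]] by blast
  then obtain x where "cp_concept n m X (spoiler_order n m i K g a) x \<noteq>
      cp_concept n m X (\<lambda>_ _. rank_order m id) x"
  proof
    assume x: "(?t(i := a), ?t(i := Suc a)) \<in> X"
    show ?thesis
      using that[of "(?t(i := a), ?t(i := Suc a))"] spoiler(1) parentless(1)
        cp_concept_upd_iff[OF net' t i am(1) a am(2) x] cp_concept_upd_iff[OF net0 t i am(1) a am(2) x]
      by blast
  next
    assume x: "(?t(i := Suc a), ?t(i := a)) \<in> X"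
    show ?thesis
      using that[of "(?t(i := Suc a), ?t(i := a))"] spoiler(2) parentless(2)
        cp_concept_upd_iff[OF net' t i a am(1) am(2)[symmetric] x]
        cp_concept_upd_iff[OF net0 t i a am(1) am(2)[symmetric] x]
      by blast
  qed
  then show ?thesis
    by auto
qed

lemma universal_adjacent_swap_vectors:
  assumes X: "swap_space n m X" and m: "2 \<le> m" and kn: "k \<le> n - 1"
    and T: "teaching_set X (C_ac n m k X) (cp_concept n m X (\<lambda>_ _. rank_order m id)) Sm"
    and i: "i < n" and a: "Suc a < m"
  shows "universal m (n - 1) k
    ((\<lambda>e. outcome_vector n i (snd (fst e))) ` {e \<in> Sm. fst e \<in> adjacent_swaps n m i a})"
    (is "universal m (n - 1) k ?V")
  unfolding universal_def
proof (intro conjI allI impI)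
  show V_sub: "?V \<subseteq> PiE {0..<n - 1} (\<lambda>_. {1..m})"
  proof (rule image_subsetI)
    fix e assume "e \<in> {e \<in> Sm. fst e \<in> adjacent_swaps n m i a}"
    then obtain t where "t \<in> outcomes n m" "snd (fst e) = t(i := a) \<or> snd (fst e) = t(i := Suc a)"
      unfolding adjacent_swaps_def by auto
    then have "snd (fst e) \<in> outcomes n m"
      using outcomes_upd[OF _ i] a by auto
    then show "outcome_vector n i (snd (fst e)) \<in> PiE {0..<n - 1} (\<lambda>_. {1..m})"
      using outcome_vector_mem i by blast
  qed
  fix K assume K: "K \<subseteq> {0..<n - 1} \<and> card K = k"
  show "(\<lambda>s. restrict s K) ` ?V = PiE K (\<lambda>_. {1..m})"
  proof
    show "(\<lambda>s. restrict s K) ` ?V \<subseteq> PiE K (\<lambda>_. {1..m})"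
    proof (rule image_subsetI)
      fix s assume "s \<in> ?V"
      then have "s \<in> PiE {0..<n - 1} (\<lambda>_. {1..m})"
        using V_sub by blast
      then show "restrict s K \<in> PiE K (\<lambda>_. {1..m})"
        using K by (auto simp: PiE_iff)
    qed
    show "PiE K (\<lambda>_. {1..m}) \<subseteq> (\<lambda>s. restrict s K) ` ?V"
    proof
      fix g assume g: "g \<in> PiE K (\<lambda>_. {1..m})"
      show "g \<in> (\<lambda>s. restrict s K) ` ?V"
      proof (rule ccontr)
        assume missing: "g \<notin> (\<lambda>s. restrict s K) ` ?V"
        \<comment> \<open>then the spoiler net is consistent with \<open>Sm\<close>, although its concept is different\<close>
        let ?c' = "cp_concept n m X (spoiler_order n m i K g a)"
        have "?c' x = l" if xl: "(x, l) \<in> Sm" for x l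
        proof -
          have x: "x \<in> X"
            using T xl unfolding teaching_set_def by blast
          have "x \<in> adjacent_swaps n m i a \<Longrightarrow> restrict (outcome_vector n i (snd x)) K \<noteq> g"
            using missing xl by force
          then have "?c' x = cp_concept n m X (\<lambda>_ _. rank_order m id) x"
            using cp_concept_spoiler_eq[OF X m i a _ _ g x] K by blast
          then show ?thesis
            using T xl unfolding teaching_set_def by auto
        qed
        moreover have "?c' \<in> C_ac n m k X"
          unfolding C_ac_def using cpnet_spoiler[OF m i a _ _ g] K by blast
        ultimately have "?c' = cp_concept n m X (\<lambda>_ _. rank_order m id)"
          using T unfolding teaching_set_def by blast
        then show False
          using cp_concept_spoiler_ne[OF X m i a _ _ g] K by blast
      qed
    qed
  qed
qed

lemma card_teaching_set_ge:
  assumes X: "swap_space n m X" and m: "2 \<le> m" and kn: "k \<le> n - 1"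
    and T: "teaching_set X (C_ac n m k X) (cp_concept n m X (\<lambda>_ _. rank_order m id)) Sm"
  shows "n * (m - 1) * U m n k \<le> card Sm"
proof -
  let ?I = "{..<n} \<times> {..<m - 1}"
  let ?A = "\<lambda>p. {e \<in> Sm. fst e \<in> adjacent_swaps n m (fst p) (snd p)}"
  have finSm: "finite Sm"
    using T finite_swap_space[OF X] unfolding teaching_set_def
    by (meson finite_SigmaI finite_UNIV finite_subset)
  have "n * (m - 1) * U m n k = (\<Sum>p\<in>?I. U m n k)"
    by simp
  also have "\<dots> \<le> (\<Sum>p\<in>?I. card (?A p))"
  proof (rule sum_mono)
    fix p assume "p \<in> ?I"
    then have "fst p < n" "Suc (snd p) < m"
      by auto
    then have "U m n k \<le> card ((\<lambda>e. outcome_vector n (fst p) (snd (fst e))) ` ?A p)"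
      using U_le_card universal_adjacent_swap_vectors[OF X m kn T] by blast
    also have "\<dots> \<le> card (?A p)"
      using finSm by (intro card_image_le) simp
    finally show "U m n k \<le> card (?A p)" .
  qed
  also have "\<dots> = card (\<Union>p\<in>?I. ?A p)"
  proof (rule card_UN_disjoint[symmetric])
    show "\<forall>p\<in>?I. \<forall>q\<in>?I. p \<noteq> q \<longrightarrow> ?A p \<inter> ?A q = {}"
      using adjacent_swaps_unique by (fastforce simp: prod_eq_iff)
  qed (use finSm in auto)
  also have "\<dots> \<le> card Sm"
    using finSm by (intro card_mono) auto
  finally show ?thesis .
qed

lemma TD_C_ac_ge_U:
  assumes "swap_space n m X" "2 \<le> m" "k \<le> n - 1"
  shows "n * (m - 1) * U m n k \<le> TD X (C_ac n m k X)"
  using TD_C_ac_ge[OF assms(1) card_teaching_set_ge[OF assms]] .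

lemma TD_C_ac_ge_power:
  assumes "swap_space n m X" "2 \<le> m" "k \<le> n - 1"
  shows "n * (m - 1) * m ^ k \<le> TD X (C_ac n m k X)"
proof -
  have "m ^ k \<le> U m n k"
    using power_le_U assms(2,3) by simp
  then show ?thesis
    using le_trans[OF mult_le_mono2 TD_C_ac_ge_U[OF assms]] by blast
qed

theorem theorem3:
  fixes n m k :: nat and X :: "((nat \<Rightarrow> nat) \<times> (nat \<Rightarrow> nat)) set"
  assumes "n \<ge> 1" and "m \<ge> 2" and "k \<le> n - 1" and "swap_space n m X"
  shows "n * (m - 1) * m ^ k \<le> n * (m - 1) * U m n k
       \<and> n * (m - 1) * U m n k \<le> TD X (C_ac n m k X)
       \<and> TD X (C_ac n m k X) \<le> e_max n k + n * (m - 1) * U m n k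
       \<and> e_max n k + n * (m - 1) * U m n k \<le> n * k + n * (m - 1) * ((n - 1) choose k) * m ^ k
       \<and> TD X (C_ac n m 0 X) = (m - 1) * n
       \<and> (n \<ge> 2 \<longrightarrow> TD X (C_ac n m 1 X) = (m - 1) * m * n)
       \<and> TD X (C_ac n m (n - 1) X) = (m - 1) * n * m ^ (n - 1)"
proof -
  note X = assms(4) and m = assms(2) and kn = assms(3)
  have m0: "0 < m"
    using m by simp
  have U_bounds: "m ^ k \<le> U m n k" "U m n k \<le> ((n - 1) choose k) * m ^ k"
    using power_le_U[OF m0 kn] U_le_choose_power[OF m0] .
  have "e_max n k \<le> n * k"
    using e_max_le kn by simp
  then have crude: "e_max n k + n * (m - 1) * U m n k \<le> n * k + n * (m - 1) * ((n - 1) choose k) * m ^ k"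
    using add_mono[OF _ mult_le_mono2[OF U_bounds(2), of "n * (m - 1)"]] by (simp add: mult.assoc)
  have k0: "TD X (C_ac n m 0 X) = (m - 1) * n"
    using TD_C_ac_0_le[OF X m0] TD_C_ac_ge_power[OF X m, of 0] by (simp add: mult.commute)
  have k1: "TD X (C_ac n m 1 X) = (m - 1) * m * n" if "n \<ge> 2"
    using TD_C_ac_1_le[OF X] TD_C_ac_ge_power[OF X m, of 1] that
    by (intro antisym) (simp_all add: mult_ac)
  have kfull: "TD X (C_ac n m (n - 1) X) = (m - 1) * n * m ^ (n - 1)"
    using TD_C_ac_le_full[OF X, of "n - 1"] TD_C_ac_ge_power[OF X m, of "n - 1"]
    by (intro antisym) (simp_all add: mult_ac)
  show ?thesis
    using mult_le_mono2[OF U_bounds(1)] TD_C_ac_ge_U[OF X m kn] TD_C_ac_le_universal[OF X m0 kn]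
      crude k0 k1 kfull by blast
qed

end
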